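(* For every $n\ge1$, \[\widehat C_n=F(X_0,\dots,X_{n-2})+\frac{(-1)^{n-1}}{(n-1)!}X_{n-1},\] where $F$ is a polynomial with rational coefficients (depending on $n$) of total degree at most $n$.
   Context: Polynomials $S_i(n)$: let $a_0,a_1,\dots$ be indeterminates, $a(x)=\sum_{i\ge0}a_ix^i$; for a positive integer $j$ set $G(x)=\prod_{i=0}^{j-1}\frac{1+a(x)x^2}{1+ix}$, $H(x)=\prod_{i=1-j}^{-1}\frac{1+ix}{1+a(x)x^2}$, $u=2j-1$, $v=j(j-1)$. For each $n\ge1$ there are unique $S_0(n),\dots,S_n(n)\in\mathbb{Q}[a_0,\dots,a_{n-2}]$, independent of $j$, with: for every positive integer $j$ the coefficient of $x^{n-1}$ in $\frac{G(x)-H(x)}{x^2}(1+a(x)x^2)$ equals $u(a_{n-1}+S_0(n)+\sum_{i=1}^nS_i(n)v^i)$. Write $S_i(n)(c_1,\dots,c_{n-1})$ for the substitution $a_k=c_{k+1}$. Recursion: $X_0,X_1,\dots$ are indeterminates, $D$ is the $\mathbb{Q}$-linear derivation of $\mathbb{Q}[X_0,X_1,\dots]$ with $D(X_k)=X_{k+1}$, $P_1=X_0$, $P_{m+1}=D(P_m)-3X_0P_m$, and for $m\ge1$ \[\widehat C_m=-S_0(m)(\widehat C_1,\dots,\widehat C_{m-1})+\sum_{i=1}^m3\cdot2^iS_i(m)(\widehat C_1,\dots,\widehat C_{m-1})P_i.\] *)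

theory Defs
  imports "HOL-Library.Poly_Mapping" "HOL-Computational_Algebra.Formal_Power_Series"
begin

text \<open>Variable k stands for the indeterminate with index k
  (X_k, resp. a_k).\<close>

type_synonym qpoly = "(nat \<Rightarrow>\<^sub>0 nat) \<Rightarrow>\<^sub>0 rat"

definition mvar :: "nat \<Rightarrow> qpoly" where
  "mvar k = Poly_Mapping.single (Poly_Mapping.single k 1) 1"

definition mconst :: "rat \<Rightarrow> qpoly" where
  "mconst c = Poly_Mapping.single 0 c"

definition mvars :: "qpoly \<Rightarrow> nat set" where
  "mvars p = \<Union> (Poly_Mapping.keys ` Poly_Mapping.keys p)"

text \<open>Total degree (0 for the zero polynomial).\<close>
definition mtotal_degree :: "qpoly \<Rightarrow> nat" where
  "mtotal_degree p = Max (insert 0 ((\<lambda>m. sum (Poly_Mapping.lookup m) (Poly_Mapping.keys m)) ` Poly_Mapping.keys p))"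

definition meval :: "(nat \<Rightarrow> qpoly) \<Rightarrow> qpoly \<Rightarrow> qpoly" where
  "meval f p = (\<Sum>m\<in>Poly_Mapping.keys p. mconst (Poly_Mapping.lookup p m) * (\<Prod>k\<in>Poly_Mapping.keys m. f k ^ Poly_Mapping.lookup m k))"

text \<open>The Q-linear derivation D with D(X_k) = X_(k+1), written out on monomials
  via the Leibniz rule.\<close>
definition mderiv :: "qpoly \<Rightarrow> qpoly" where
  "mderiv p = (\<Sum>m\<in>Poly_Mapping.keys p. mconst (Poly_Mapping.lookup p m) *
      (\<Sum>k\<in>Poly_Mapping.keys m. of_nat (Poly_Mapping.lookup m k) * mvar (Suc k) * mvar k ^ (Poly_Mapping.lookup m k - 1) *
          (\<Prod>k'\<in>Poly_Mapping.keys m - {k}. mvar k' ^ Poly_Mapping.lookup m k')))"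

definition finv :: "qpoly fps \<Rightarrow> qpoly fps" where
  "finv f = fps_right_inverse f 1"

text \<open>a(x) = sum a_i x^i, with a_i the indeterminate mvar i.\<close>
definition afps :: "qpoly fps" where
  "afps = Abs_fps mvar"

definition Aser :: "qpoly fps" where
  "Aser = 1 + afps * fps_X ^ 2"

definition onepl :: "int \<Rightarrow> qpoly fps" where
  "onepl i = 1 + fps_const (of_int i) * fps_X"

definition Gser :: "int \<Rightarrow> qpoly fps" where
  "Gser j = (\<Prod>i\<in>{0..j-1}. Aser * finv (onepl i))"

definition Hser :: "int \<Rightarrow> qpoly fps" where
  "Hser j = (\<Prod>i\<in>{1-j..-1}. onepl i * finv Aser)"

definition GHcoeff :: "int \<Rightarrow> nat \<Rightarrow> qpoly" where
  "GHcoeff j n = fps_nth (fps_shift 2 (Gser j - Hser j) * Aser) (n - 1)"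

text \<open>S i stands for S_i(n) (and is 0 for i > n).\<close>
definition S_spec :: "nat \<Rightarrow> (nat \<Rightarrow> qpoly) \<Rightarrow> bool" where
  "S_spec n S \<longleftrightarrow> (\<forall>i>n. S i = 0) \<and> (\<forall>i\<le>n. mvars (S i) \<subseteq> {..<n-1}) \<and>
     (\<forall>j::int. j \<ge> 1 \<longrightarrow>
        GHcoeff j n = of_int (2*j - 1) *
          (mvar (n-1) + S 0 + (\<Sum>i=1..n. S i * of_int (j*(j-1)) ^ i)))"

definition Spoly :: "nat \<Rightarrow> nat \<Rightarrow> qpoly" where
  "Spoly n = (THE S. S_spec n S)"

fun Ppoly :: "nat \<Rightarrow> qpoly" where
  "Ppoly 0 = 0"
| "Ppoly (Suc 0) = mvar 0"
| "Ppoly (Suc (Suc m)) = mderiv (Ppoly (Suc m)) - 3 * mvar 0 * Ppoly (Suc m)"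

text \<open>Substitution a_k := cs ! k, where cs = [C_1, ..., C_(m-1)].\<close>
definition subst_list :: "qpoly list \<Rightarrow> nat \<Rightarrow> qpoly" where
  "subst_list cs k = (if k < length cs then cs ! k else 0)"

definition Cstep :: "nat \<Rightarrow> qpoly list \<Rightarrow> qpoly" where
  "Cstep m cs = - meval (subst_list cs) (Spoly m 0) +
     (\<Sum>i=1..m. of_nat (3 * 2^i) * meval (subst_list cs) (Spoly m i) * Ppoly i)"

text \<open>Clist m = [C_1, ..., C_m].\<close>
primrec Clist :: "nat \<Rightarrow> qpoly list" where
  "Clist 0 = []"
| "Clist (Suc m) = Clist m @ [Cstep (Suc m) (Clist m)]"

definition Chat :: "nat \<Rightarrow> qpoly" where
  "Chat m = Clist m ! (m - 1)"

end

(* Put R_j(x) = (1 + a(x) x^2)^j / ((1 + 0x)(1 + x)...(1 + (j-1)x)) for integers j, with the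
   obvious meaning for j < 0, so that G = R_j and H = R_(1-j).  From R_(j+1) (1 + jx) = (1 + a x^2) R_j
   each coefficient [x^k] R_j is, as a function of j, a polynomial rho_k of degree 2k; giving j weight 1
   and a_i weight 2i + 3, rho_k even has weight at most 2k, and its two top coefficients are explicit.
   The coefficient in the definition of S_i(n) is therefore Q(j) - Q(1 - j) for one polynomial Q, i.e.
   (2j - 1) times a polynomial in v = j(j - 1); this exhibits S_i(n) with weight at most 2(n - i) + 1 and
   S_n(n) an explicit rational.  Substituting C_(k+1), of total degree k + 1, for a_k turns weight
   2D + 1 into total degree D, and X_(n-1) enters C_n only through 3 * 2^n * S_n(n) * P_n, whose
   X_(n-1)-coefficient is (-1)^(n-1) / (n-1)!. *)

theory Submission
  imports Defs "HOL-Computational_Algebra.Polynomial"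
begin

unbundle fps_syntax

abbreviation lk where "lk \<equiv> Poly_Mapping.lookup"
abbreviation ks where "ks \<equiv> Poly_Mapping.keys"

lemma lookup_mconst_mult: "lk (mconst r * x) m = r * lk x m"
proof -
  have "mconst r * x = Poly_Mapping.map ((*) r) x"
    unfolding mconst_def by (simp add: mult_map_scale_conv_mult)
  thus ?thesis by (simp add: map.rep_eq when_def)
qed

lemma mconst_0[simp]: "mconst 0 = 0" by (simp add: mconst_def)
lemma mconst_1[simp]: "mconst 1 = 1" by (simp add: mconst_def)
lemma mconst_add: "mconst (a + b) = mconst a + mconst b" by (simp add: mconst_def single_add)
lemma mconst_diff: "mconst (a - b) = mconst a - mconst b" by (simp add: mconst_def single_diff)
lemma mconst_uminus: "mconst (- a) = - mconst a" by (simp add: mconst_def single_uminus)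
lemma mconst_mult: "mconst (a * b) = mconst a * mconst b" by (simp add: mconst_def mult_single)
lemma mconst_of_int: "mconst (of_int z) = of_int z" by (simp add: mconst_def)
lemma mconst_of_nat: "mconst (of_nat z) = of_nat z" by (simp add: mconst_def)
lemma keys_mconst: "ks (mconst r) \<subseteq> {0}" by (simp add: mconst_def)
lemma keys_mconst_mult: "ks (mconst r * x) \<subseteq> ks x"
  by (auto simp: in_keys_iff lookup_mconst_mult)

lemma lookup_mult_of_int:
  fixes c :: qpoly shows "lk (c * of_int z) m = of_int z * lk c m"
  by (simp only: mult.commute[of c] mconst_of_int[symmetric] lookup_mconst_mult)

lemma of_int_mult_eq_0_qpoly:
  fixes x :: qpoly
  assumes "of_int z * x = 0" "z \<noteq> 0" shows "x = 0"
proof -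
  have "x = mconst (1 / of_int z) * (of_int z * x)"
    using assms(2) by (simp flip: mult.assoc mconst_of_int mconst_mult)
  thus ?thesis using assms(1) by simp
qed

lemma of_nat_mult_cancel_qpoly:
  fixes x y :: qpoly
  assumes "of_nat n * x = of_nat n * y" "n \<noteq> 0" shows "x = y"
proof -
  have "of_int (int n) * (x - y) = 0" using assms(1) by (simp add: algebra_simps)
  hence "x - y = 0" by (rule of_int_mult_eq_0_qpoly) (use assms(2) in simp)
  thus ?thesis by simp
qed

lemma lookup_mvar_mult_single:
  assumes "k \<noteq> k'" shows "lk (mvar k * c) (Poly_Mapping.single k' 1) = 0"
proof (rule ccontr)
  assume "lk (mvar k * c) (Poly_Mapping.single k' 1) \<noteq> 0"
  hence "Poly_Mapping.single k' 1 \<in> ks (mvar k * c)" by (simp add: in_keys_iff)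
  then obtain b where "Poly_Mapping.single k' (1::nat) = Poly_Mapping.single k 1 + b"
    using keys_mult[of "mvar k" c] by (auto simp: mvar_def)
  hence "lk (Poly_Mapping.single k' (1::nat)) k = lk (Poly_Mapping.single k 1 + b) k" by simp
  thus False using assms by (simp add: lookup_add lookup_single)
qed

section \<open>Weights\<close>

definition weight :: "(nat \<Rightarrow>\<^sub>0 nat) \<Rightarrow> nat" where
  "weight m = (\<Sum>k\<in>ks m. lk m k * (2*k+3))"

lemma weight_add: "weight (a + b) = weight a + weight b"
  unfolding weight_def by (rule setsum_keys_plus_distrib) (auto simp: algebra_simps)

lemma weight_0[simp]: "weight 0 = 0" by (simp add: weight_def)

lemma weight_single: "weight (Poly_Mapping.single k 1) = 2*k+3" by (simp add: weight_def)

lemma weight_ge: "k \<in> ks m \<Longrightarrow> lk m k * (2*k+3) \<le> weight m"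
  unfolding weight_def by (rule member_le_sum) auto

lemma weight_le_single_key:
  assumes k: "k \<in> ks m" and le: "weight m \<le> 2 * k + 3"
  shows "m = Poly_Mapping.single k 1"
proof -
  have m: "weight m = lk m k * (2 * k + 3) + (\<Sum>k'\<in>ks m - {k}. lk m k' * (2 * k' + 3))"
    unfolding weight_def using sum.remove[OF _ k] by simp
  have pos: "lk m k \<ge> 1" using k by (simp add: in_keys_iff)
  have one: "lk m k = 1"
  proof (rule ccontr)
    assume "lk m k \<noteq> 1"
    hence "2 * (2 * k + 3) \<le> lk m k * (2 * k + 3)" using pos by (intro mult_le_mono1) simp
    thus False using le m by simp
  qed
  have rest: "ks m \<subseteq> {k}"
  proof
    fix k' assume k': "k' \<in> ks m"
    show "k' \<in> {k}"
    proof (rule ccontr)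
      assume "k' \<notin> {k}"
      hence "lk m k' * (2 * k' + 3) \<le> (\<Sum>k'\<in>ks m - {k}. lk m k' * (2 * k' + 3))"
        using k' by (intro member_le_sum) auto
      hence "lk m k' = 0" using le m one by simp
      thus False using k' by (simp add: in_keys_iff)
    qed
  qed
  show ?thesis
  proof (rule poly_mapping_eqI)
    fix x show "lk m x = lk (Poly_Mapping.single k 1) x"
      using one rest by (cases "x = k") (auto simp: lookup_single_not_eq not_in_keys_iff_lookup_eq_zero)
  qed
qed

definition weight_le :: "nat \<Rightarrow> qpoly \<Rightarrow> bool" where
  "weight_le d c \<longleftrightarrow> (\<forall>m\<in>ks c. weight m \<le> d)"

lemma weight_le_0[simp]: "weight_le d 0" by (simp add: weight_le_def)
lemma weight_le_mono: "weight_le d c \<Longrightarrow> d \<le> d' \<Longrightarrow> weight_le d' c" by (auto simp: weight_le_def)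
lemma weight_le_add: "weight_le d a \<Longrightarrow> weight_le d b \<Longrightarrow> weight_le d (a + b)"
  using keys_add[of a b] by (auto simp: weight_le_def)
lemma weight_le_diff: "weight_le d a \<Longrightarrow> weight_le d b \<Longrightarrow> weight_le d (a - b)"
  using keys_diff[of a b] by (auto simp: weight_le_def)
lemma weight_le_mult: "weight_le d a \<Longrightarrow> weight_le d' b \<Longrightarrow> weight_le (d + d') (a * b)"
  using keys_mult[of a b] by (force simp: weight_le_def weight_add intro: add_mono)
lemma weight_le_sum: "(\<And>i. i \<in> A \<Longrightarrow> weight_le d (f i)) \<Longrightarrow> weight_le d (sum f A)"
  by (induction A rule: infinite_finite_induct) (auto intro: weight_le_add)
lemma weight_le_mconst[simp]: "weight_le d (mconst r)"
  using keys_mconst[of r] by (auto simp: weight_le_def)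
lemma weight_le_1[simp]: "weight_le d 1"
  by (simp add: weight_le_def)
lemma weight_le_mconst_mult: "weight_le d a \<Longrightarrow> weight_le d (mconst r * a)"
  using keys_mconst_mult[of r a] by (auto simp: weight_le_def)
lemma weight_le_of_int[simp]: "weight_le d (of_int z)"
  by (metis weight_le_mconst mconst_of_int)
lemma weight_le_mvar: "weight_le (2*k+3) (mvar k)"
  using weight_single[of k] by (simp add: weight_le_def mvar_def)

lemma weight_le_var_bound:
  assumes "weight_le d c" "m \<in> ks c" "k \<in> ks m" shows "2 * k + 3 \<le> d"
proof -
  have "1 * (2 * k + 3) \<le> lk m k * (2 * k + 3)"
    using assms(3) by (intro mult_le_mono1) (simp add: in_keys_iff)
  also have "\<dots> \<le> weight m" by (rule weight_ge[OF assms(3)])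
  also have "\<dots> \<le> d" using assms(1,2) by (auto simp: weight_le_def)
  finally show ?thesis by simp
qed

definition pweight_le :: "nat \<Rightarrow> qpoly poly \<Rightarrow> bool" where
  "pweight_le d p \<longleftrightarrow> (\<forall>e. \<forall>m\<in>ks (coeff p e). e + weight m \<le> d)"

lemma pweight_le_0[simp]: "pweight_le d 0" by (simp add: pweight_le_def)
lemma pweight_le_mono: "pweight_le d p \<Longrightarrow> d \<le> d' \<Longrightarrow> pweight_le d' p"
  by (fastforce simp: pweight_le_def)
lemma pweight_le_add: "pweight_le d a \<Longrightarrow> pweight_le d b \<Longrightarrow> pweight_le d (a + b)"
  using keys_add by (fastforce simp: pweight_le_def)
lemma pweight_le_uminus: "pweight_le d a \<Longrightarrow> pweight_le d (- a)"
  by (auto simp: pweight_le_def)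
lemma pweight_le_diff: "pweight_le d a \<Longrightarrow> pweight_le d b \<Longrightarrow> pweight_le d (a - b)"
  by (simp only: diff_conv_add_uminus pweight_le_add pweight_le_uminus)
lemma pweight_le_sum: "(\<And>i. i \<in> A \<Longrightarrow> pweight_le d (f i)) \<Longrightarrow> pweight_le d (sum f A)"
  by (induction A rule: infinite_finite_induct) (auto intro: pweight_le_add)

lemma pweight_le_mult:
  assumes "pweight_le d a" "pweight_le d' b" shows "pweight_le (d + d') (a * b)"
  unfolding pweight_le_def
proof (intro allI ballI)
  fix e m assume "m \<in> ks (coeff (a * b) e)"
  then obtain i where i: "i \<le> e" "m \<in> ks (coeff a i * coeff b (e - i))"
    using keys_sum[of "\<lambda>i. coeff a i * coeff b (e - i)" "{..e}"] by (auto simp: coeff_mult)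
  then obtain m1 m2 where "m = m1 + m2" "m1 \<in> ks (coeff a i)" "m2 \<in> ks (coeff b (e - i))"
    using keys_mult[of "coeff a i" "coeff b (e - i)"] by blast
  with assms i show "e + weight m \<le> d + d'"
    unfolding pweight_le_def by (fastforce simp: weight_add)
qed

lemma lookup_coeff_pweight_le_eq_0: "pweight_le d p \<Longrightarrow> d < e + weight m \<Longrightarrow> lk (coeff p e) m = 0"
  by (meson in_keys_iff leD pweight_le_def)

lemma pweight_le_const: "weight_le d c \<Longrightarrow> pweight_le d [:c:]"
  by (auto simp: pweight_le_def weight_le_def coeff_pCons split: nat.splits)
lemma pweight_le_1[simp]: "pweight_le d 1"
  by (auto simp: pweight_le_def coeff_1)
lemma pweight_le_X: "pweight_le 1 [:0, 1:]"
  by (auto simp: pweight_le_def coeff_pCons split: nat.splits)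
lemma pweight_le_X_plus_1: "pweight_le 1 [:1, 1:]"
  by (auto simp: pweight_le_def coeff_pCons split: nat.splits)

lemma pweight_le_degree: "pweight_le d p \<Longrightarrow> degree p \<le> d"
  unfolding pweight_le_def
  by (rule degree_le) (metis add_leD1 keys_eq_empty leD equals0I)

lemma pweight_le_coeff: "pweight_le d p \<Longrightarrow> e \<le> d \<Longrightarrow> weight_le (d - e) (coeff p e)"
  by (fastforce simp: pweight_le_def weight_le_def)

lemma pweight_le_pCons_iff:
  "pweight_le (Suc d) (pCons a p) \<longleftrightarrow> weight_le (Suc d) a \<and> pweight_le d p"
  by (auto simp: pweight_le_def weight_le_def coeff_pCons split: nat.splits)

lemma pweight_le_pcompose: "pweight_le d p \<Longrightarrow> pweight_le 1 q \<Longrightarrow> pweight_le d (pcompose p q)"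
proof (induction p arbitrary: d)
  case (pCons a p)
  show ?case
  proof (cases d)
    case 0
    with pCons.prems(1) have "p = 0"
      using pweight_le_degree[of 0 "pCons a p"] by (cases "p = 0") auto
    thus ?thesis using pCons.prems(1) 0 by (simp add: pweight_le_def weight_le_def pcompose_pCons)
  next
    case (Suc d')
    hence "weight_le d a" "pweight_le d' p" using pCons.prems(1) pweight_le_pCons_iff by auto
    hence "pweight_le (1 + d') (q * pcompose p q)"
      using pCons.IH pCons.prems(2) pweight_le_mult by blast
    thus ?thesis using \<open>weight_le d a\<close> Suc
      by (auto simp: pcompose_pCons intro!: pweight_le_add pweight_le_const)
  qed
qed simp

section \<open>Forward differences\<close>

lemma pcompose_power: "pcompose (p ^ n) q = (pcompose p q) ^ n"
  by (induction n) (simp_all add: pcompose_mult pcompose_1)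

lemma coeff_X_plus_1_power: "coeff ([:1, 1:] ^ i) e = (of_nat (i choose e) :: 'a :: comm_semiring_1)"
proof (cases "e \<le> i")
  case True thus ?thesis using coeff_linear_poly_power[of e i 1 1] by simp
next
  case False
  have "degree ([:1::'a, 1:] ^ i) \<le> i"
    using degree_power_le[of "[:1::'a,1:]" i] by simp
  with False show ?thesis by (simp add: coeff_eq_0 binomial_eq_0)
qed

lemma coeff_pcompose_X_plus_1:
  fixes p :: "'a :: comm_ring_1 poly"
  assumes "degree p \<le> N"
  shows "coeff (pcompose p [:1, 1:]) e = (\<Sum>i\<le>N. of_nat (i choose e) * coeff p i)"
proof -
  have "pcompose p [:1, 1:] = pcompose (\<Sum>i\<le>degree p. monom (coeff p i) i) [:1, 1:]"
    by (simp add: poly_as_sum_of_monoms)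
  also have "\<dots> = (\<Sum>i\<le>degree p. smult (coeff p i) ([:1, 1:] ^ i))"
    by (simp add: pcompose_sum monom_altdef pcompose_smult pcompose_power pcompose_pCons)
  finally have "coeff (pcompose p [:1, 1:]) e = (\<Sum>i\<le>degree p. of_nat (i choose e) * coeff p i)"
    by (simp add: coeff_sum coeff_X_plus_1_power mult.commute)
  also have "\<dots> = (\<Sum>i\<le>N. of_nat (i choose e) * coeff p i)"
    by (rule sum.mono_neutral_left) (use assms in \<open>auto simp: coeff_eq_0\<close>)
  finally show ?thesis .
qed

lemma coeff_pcompose_X_plus_1_top:
  fixes p :: "'a :: comm_ring_1 poly"
  assumes "degree p \<le> Suc (Suc m)"
  shows "coeff (pcompose p [:1, 1:]) m = coeff p m + of_nat (Suc m) * coeff p (Suc m)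
           + of_nat (Suc (Suc m) choose m) * coeff p (Suc (Suc m))"
proof -
  have "coeff (pcompose p [:1, 1:]) m = (\<Sum>i\<le>Suc (Suc m). of_nat (i choose m) * coeff p i)"
    by (rule coeff_pcompose_X_plus_1[OF assms])
  also have "\<dots> = (\<Sum>i\<in>{m, Suc m, Suc (Suc m)}. of_nat (i choose m) * coeff p i)"
    by (rule sum.mono_neutral_right) (auto simp: binomial_eq_0)
  finally show ?thesis by (simp add: add.assoc)
qed

definition fdiff :: "'a :: comm_ring_1 poly \<Rightarrow> 'a poly" where
  "fdiff p = pcompose p [:1, 1:] - p"

lemma fdiff_add: "fdiff (a + b) = fdiff a + fdiff b"
  by (simp add: fdiff_def pcompose_add)

lemma poly_fdiff: "poly (fdiff p) x = poly p (x + 1) - poly p x"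
  by (simp add: fdiff_def poly_pcompose algebra_simps)

lemma coeff_fdiff_top:
  fixes p :: "'a :: comm_ring_1 poly"
  assumes "degree p \<le> Suc (Suc m)"
  shows "coeff (fdiff p) m = of_nat (Suc m) * coeff p (Suc m)
           + of_nat (Suc (Suc m) choose m) * coeff p (Suc (Suc m))"
  using coeff_pcompose_X_plus_1_top[OF assms] by (simp add: fdiff_def)

lemma coeff_fdiff_0:
  fixes p :: "'a :: comm_ring_1 poly"
  assumes "degree p \<le> N" shows "coeff (fdiff p) 0 = (\<Sum>i=1..N. coeff p i)"
  using coeff_pcompose_X_plus_1[OF assms, of 0]
  by (simp add: fdiff_def atMost_atLeast0 sum.atLeast_Suc_atMost)

lemma antidiff_monom:
  fixes c :: qpoly
  assumes "weight_le (d - e) c" "e \<le> d"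
  obtains s where "pweight_le (Suc d) s" "pweight_le d (fdiff s)"
    "coeff (fdiff s) e = c" "\<And>k. e < k \<Longrightarrow> coeff (fdiff s) k = 0"
proof
  define c' where "c' = mconst (1 / of_nat (Suc e)) * c"
  define s where "s = monom c' (Suc e)"
  have wc': "weight_le (d - e) c'" unfolding c'_def by (rule weight_le_mconst_mult[OF assms(1)])
  have "coeff (pcompose s [:1,1:]) k = (\<Sum>i\<le>Suc e. of_nat (i choose k) * coeff s i)" for k
    by (rule coeff_pcompose_X_plus_1) (simp add: s_def degree_monom_le)
  hence fs: "coeff (fdiff s) k = (if k \<le> e then of_nat (Suc e choose k) * c' else 0)" for k
    by (auto simp: fdiff_def s_def coeff_monom binomial_eq_0 if_distrib cong: if_cong)
  show "pweight_le (Suc d) s"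
    using wc' assms(2) by (auto simp: pweight_le_def weight_le_def s_def coeff_monom)
  show "pweight_le d (fdiff s)" unfolding pweight_le_def
  proof (intro allI ballI)
    fix k m assume m: "m \<in> ks (coeff (fdiff s) k)"
    hence "k \<le> e" "m \<in> ks c'"
      using keys_mconst_mult[of "of_nat (Suc e choose k)" c']
      by (auto simp: fs mconst_of_nat split: if_splits)
    with wc' assms(2) show "k + weight m \<le> d" by (auto simp: weight_le_def)
  qed
  have "of_nat (Suc e) * c' = mconst (of_nat (Suc e) * (1 / of_nat (Suc e))) * c"
    by (simp only: c'_def mconst_mult mconst_of_nat mult.assoc)
  thus "coeff (fdiff s) e = c" by (simp add: fs)
  show "coeff (fdiff s) k = 0" if "e < k" for k using that by (simp add: fs)
qed

lemma antidiff_exists: "pweight_le d p \<Longrightarrow> \<exists>s. fdiff s = p \<and> pweight_le (Suc d) s"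
proof (induction "degree p" arbitrary: p rule: less_induct)
  case less
  show ?case
  proof (cases "p = 0")
    case True thus ?thesis by (intro exI[of _ 0]) (simp add: fdiff_def)
  next
    case False
    define e where "e = degree p"
    have ed: "e \<le> d" using pweight_le_degree[OF less.prems] e_def by simp
    obtain s0 where s0: "pweight_le (Suc d) s0" "pweight_le d (fdiff s0)"
      "coeff (fdiff s0) e = coeff p e" "\<And>k. e < k \<Longrightarrow> coeff (fdiff s0) k = 0"
      using antidiff_monom[OF pweight_le_coeff[OF less.prems ed] ed] by metis
    define p' where "p' = p - fdiff s0"
    have "coeff p' k = 0" if "k \<ge> e" for k
      using that s0(3,4) by (cases "k = e") (auto simp: p'_def e_def coeff_eq_0)
    hence "p' = 0 \<or> degree p' < degree p"
      using leading_coeff_0_iff by (metis e_def leI)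
    moreover have "pweight_le d p'" unfolding p'_def by (rule pweight_le_diff[OF less.prems s0(2)])
    ultimately obtain s' where s': "fdiff s' = p'" "pweight_le (Suc d) s'"
      using less.hyps[of p'] by (metis fdiff_def diff_self pweight_le_0 pcompose_0)
    have "fdiff (s0 + s') = p" by (simp add: fdiff_add s' p'_def)
    moreover have "pweight_le (Suc d) (s0 + s')" by (rule pweight_le_add[OF s0(1) s'(2)])
    ultimately show ?thesis by blast
  qed
qed

lemma lookup_poly_of_int:
  "lk (poly P (of_int j :: qpoly)) m = poly (map_poly (\<lambda>c. lk c m) P) (of_int j)"
proof (induction P)
  case (pCons a P)
  have "lk (poly (pCons a P) (of_int j)) m = lk a m + of_int j * lk (poly P (of_int j)) m"
    by (simp add: lookup_add mconst_of_int[symmetric] lookup_mconst_mult)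
  thus ?case using pCons.IH by (simp add: map_poly_pCons)
qed simp

lemma rat_poly_eq_0_on_ints:
  fixes p :: "rat poly"
  assumes "\<And>j::int. poly p (of_int j) = 0" shows "p = 0"
proof (rule ccontr)
  assume "p \<noteq> 0"
  hence "finite {x. poly p x = 0}" by (rule poly_roots_finite)
  moreover have "range (of_int :: int \<Rightarrow> rat) \<subseteq> {x. poly p x = 0}" using assms by auto
  moreover have "infinite (range (of_int :: int \<Rightarrow> rat))"
    using finite_imageD[of "of_int :: int \<Rightarrow> rat" UNIV] by (auto simp: inj_on_def)
  ultimately show False by (meson finite_subset)
qed

lemma qpoly_poly_eqI_on_ints:
  fixes p q :: "qpoly poly"
  assumes "\<And>j::int. poly p (of_int j) = poly q (of_int j)" shows "p = q"
proof -
  have "coeff (p - q) i = 0" for i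
  proof (rule poly_mapping_eqI)
    fix m
    have "map_poly (\<lambda>c. lk c m) (p - q) = 0"
      by (rule rat_poly_eq_0_on_ints) (simp add: lookup_poly_of_int[symmetric] assms)
    thus "lk (coeff (p - q) i) m = lk 0 m"
      by (metis coeff_0 coeff_map_poly lookup_zero)
  qed
  thus ?thesis by (metis coeff_0 poly_eqI right_minus_eq)
qed

lemma int_shift_invariant_const:
  fixes g :: "int \<Rightarrow> 'a"
  assumes "\<And>j. g (j + 1) = g j" shows "g j = g 0"
proof (induction j rule: int_induct[where k=0])
  case (step1 i) thus ?case using assms[of i] by simp
next
  case (step2 i) thus ?case using assms[of "i - 1"] by simp
qed simp

section \<open>The series R_j and the polynomials rho_k\<close>

definition Rser :: "int \<Rightarrow> qpoly fps" where
  "Rser j = (if 0 \<le> j then Aser ^ nat j * (\<Prod>i<nat j. finv (onepl (int i)))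
           else (\<Prod>i\<in>{1..nat (-j)}. onepl (- int i)) * finv Aser ^ nat (-j))"

lemma Aser_nth: "Aser $ t = (if t = 0 then 1 else if t = 1 then 0 else mvar (t - 2))"
  by (simp add: Aser_def afps_def fps_X_power_mult_right_nth)

lemma finv_onepl: "onepl i * finv (onepl i) = 1"
  unfolding finv_def by (rule fps_right_inverse) (simp add: onepl_def)

lemma finv_Aser: "Aser * finv Aser = 1"
  unfolding finv_def by (rule fps_right_inverse) (simp add: Aser_nth)

lemma Rser_rec: "Rser (j + 1) * onepl j = Aser * Rser j"
proof (cases "0 \<le> j")
  case True
  then obtain n where n: "j = int n" by (metis nonneg_int_cases)
  have j1: "j + 1 = int (Suc n)" by (simp add: n)
  have "Rser (j + 1) = Aser ^ Suc n * (\<Prod>i<Suc n. finv (onepl (int i)))"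
    unfolding j1 Rser_def by (simp only: nat_int if_True of_nat_0_le_iff)
  hence "Rser (j + 1) * onepl j = Aser ^ Suc n * (\<Prod>i<n. finv (onepl (int i))) * (finv (onepl (int n)) * onepl (int n))"
    by (simp add: n mult_ac)
  also have "\<dots> = Aser * Rser j" using finv_onepl[of "int n"]
    by (simp add: Rser_def n mult_ac)
  finally show ?thesis .
next
  case False
  define s where "s = nat (- j) - 1"
  have s: "j = - int (Suc s)" using False by (simp add: s_def)
  have R1: "Rser (j + 1) = (\<Prod>i\<in>{1..s}. onepl (- int i)) * finv Aser ^ s"
  proof (cases s)
    case (Suc s')
    hence "\<not> 0 \<le> j + 1" "nat (- (j + 1)) = s" using s by auto
    thus ?thesis by (simp add: Rser_def)
  qed (use s in \<open>simp add: Rser_def\<close>)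
  have "\<not> 0 \<le> j" "nat (- j) = Suc s" "- 1 - int s = j" "{1..Suc s} = insert (Suc s) {1..s}"
    using s by auto
  hence "Rser j = onepl j * (\<Prod>i\<in>{1..s}. onepl (- int i)) * finv Aser ^ s * finv Aser"
    by (simp add: Rser_def mult_ac)
  hence "Aser * Rser j = (Aser * finv Aser) * (onepl j * Rser (j + 1))"
    by (simp add: R1 mult_ac)
  thus ?thesis by (simp add: finv_Aser mult.commute)
qed

definition Rcoeff :: "nat \<Rightarrow> int \<Rightarrow> qpoly" where
  "Rcoeff k j = Rser j $ k"

lemma Rcoeff_at_0: "Rcoeff k 0 = (if k = 0 then 1 else 0)"
  by (simp add: Rcoeff_def Rser_def)

lemma Rcoeff_rec:
  "Rcoeff k (j + 1) + (if k = 0 then 0 else of_int j * Rcoeff (k - 1) (j + 1)) =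
   (\<Sum>t\<le>k. Aser $ t * Rcoeff (k - t) j)"
proof -
  have "Rser (j + 1) * onepl j = Rser (j + 1) + fps_const (of_int j) * (Rser (j + 1) * fps_X)"
    by (simp add: onepl_def algebra_simps)
  hence "(Rser (j + 1) * onepl j) $ k =
      Rcoeff k (j + 1) + (if k = 0 then 0 else of_int j * Rcoeff (k - 1) (j + 1))"
    by (simp add: Rcoeff_def)
  moreover have "(Aser * Rser j) $ k = (\<Sum>t\<le>k. Aser $ t * Rcoeff (k - t) j)"
    by (simp add: fps_mult_nth Rcoeff_def atLeast0AtMost)
  ultimately show ?thesis by (simp add: Rser_rec)
qed

lemma Rcoeff_0: "Rcoeff 0 j = 1"
proof -
  have "Rcoeff 0 (j + 1) = Rcoeff 0 j" for j using Rcoeff_rec[of 0 j] by (simp add: Aser_nth)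
  hence "Rcoeff 0 j = Rcoeff 0 0" by (rule int_shift_invariant_const)
  thus ?thesis by (simp add: Rcoeff_at_0)
qed

definition Rdiff :: "(nat \<Rightarrow> qpoly poly) \<Rightarrow> nat \<Rightarrow> qpoly poly" where
  "Rdiff rh k = - ([:0, 1:] * pcompose (rh (k - 1)) [:1, 1:]) +
     (\<Sum>t\<in>{2..k}. [:mvar (t - 2):] * rh (k - t))"

lemma Rcoeff_fdiff:
  assumes k: "k \<ge> 1" and rep: "\<And>i j. i < k \<Longrightarrow> poly (rh i) (of_int j) = Rcoeff i j"
  shows "Rcoeff k (j + 1) - Rcoeff k j = poly (Rdiff rh k) (of_int j)"
proof -
  have "{..k} = {0, 1} \<union> {2..k}" using k by auto
  hence "Rcoeff k (j + 1) + of_int j * Rcoeff (k - 1) (j + 1) =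
      Rcoeff k j + (\<Sum>t\<in>{2..k}. mvar (t - 2) * Rcoeff (k - t) j)"
    using Rcoeff_rec[of k j] k by (simp add: sum.union_disjoint Aser_nth)
  moreover have "poly (rh (k - 1)) (1 + of_int j) = Rcoeff (k - 1) (j + 1)"
    using rep[of "k - 1" "j + 1"] k by (simp add: add.commute)
  ultimately show ?thesis
    unfolding Rdiff_def using k
    by (simp add: poly_pcompose rep poly_sum algebra_simps del: of_int_add)
qed

lemma pweight_le_Rdiff:
  assumes k: "k \<ge> 1" and G: "\<And>i. i < k \<Longrightarrow> pweight_le (2 * i) (rh i)"
  shows "pweight_le (2 * k - 1) (Rdiff rh k)"
  unfolding Rdiff_def
proof (intro pweight_le_add pweight_le_uminus pweight_le_sum)
  have "pweight_le (1 + 2 * (k - 1)) ([:0, 1:] * pcompose (rh (k - 1)) [:1, 1:])"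
    by (intro pweight_le_mult pweight_le_X pweight_le_pcompose pweight_le_X_plus_1 G) (use k in auto)
  moreover have "1 + 2 * (k - 1) = 2 * k - 1" using k by simp
  ultimately show "pweight_le (2 * k - 1) ([:0, 1:] * pcompose (rh (k - 1)) [:1, 1:])" by simp
next
  fix t assume t: "t \<in> {2..k}"
  have "pweight_le ((2 * (t - 2) + 3) + 2 * (k - t)) ([:mvar (t - 2):] * rh (k - t))"
    by (intro pweight_le_mult pweight_le_const weight_le_mvar G) (use t in auto)
  moreover have "(2 * (t - 2) + 3) + 2 * (k - t) = 2 * k - 1" using t by auto
  ultimately show "pweight_le (2 * k - 1) ([:mvar (t - 2):] * rh (k - t))" by simp
qed

definition Rinterp :: "nat \<Rightarrow> qpoly poly \<Rightarrow> bool" where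
  "Rinterp k p \<longleftrightarrow> (\<forall>j. poly p (of_int j) = Rcoeff k j) \<and> pweight_le (2 * k) p"

lemma Rinterp_exists: "\<exists>p. Rinterp k p"
proof (induction k rule: less_induct)
  case (less k)
  show ?case
  proof (cases "k = 0")
    case True
    have "Rinterp 0 1" by (simp add: Rinterp_def Rcoeff_0)
    thus ?thesis using True by blast
  next
    case False
    hence k: "k \<ge> 1" by simp
    define rh where "rh i = (SOME p. Rinterp i p)" for i
    have rh: "Rinterp i (rh i)" if "i < k" for i
      unfolding rh_def using less.IH[OF that] by (rule someI_ex)
    have "pweight_le (2 * k - 1) (Rdiff rh k)"
      by (rule pweight_le_Rdiff[OF k]) (use rh in \<open>auto simp: Rinterp_def\<close>)
    then obtain s where s: "fdiff s = Rdiff rh k" "pweight_le (2 * k) s"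
      using antidiff_exists k by fastforce
    define p where "p = s - [:coeff s 0:]"
    have "pweight_le (2 * k) p" unfolding p_def
      by (intro pweight_le_diff s(2) pweight_le_const) (use pweight_le_coeff[OF s(2), of 0] in simp)
    moreover have "poly p (of_int j) = Rcoeff k j" for j
    proof -
      define g where "g j = Rcoeff k j - poly s (of_int j)" for j
      have "g (j + 1) = g j" for j
      proof -
        have "Rcoeff k (j + 1) - Rcoeff k j = poly (fdiff s) (of_int j)"
          using Rcoeff_fdiff[OF k, of rh j] rh s(1) by (simp add: Rinterp_def)
        thus ?thesis by (simp add: g_def poly_fdiff algebra_simps)
      qed
      hence "g j = g 0" by (rule int_shift_invariant_const)
      thus ?thesis using False by (simp add: g_def p_def Rcoeff_at_0 poly_0_coeff_0 algebra_simps)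
    qed
    ultimately show ?thesis unfolding Rinterp_def by blast
  qed
qed

definition Rpoly :: "nat \<Rightarrow> qpoly poly" where
  "Rpoly k = (SOME p. Rinterp k p)"

lemma Rpoly_Rinterp: "Rinterp k (Rpoly k)"
  unfolding Rpoly_def using Rinterp_exists by (rule someI_ex)

lemma poly_Rpoly: "poly (Rpoly k) (of_int j) = Rcoeff k j"
  using Rpoly_Rinterp by (simp add: Rinterp_def)

lemma pweight_le_Rpoly: "pweight_le (2 * k) (Rpoly k)"
  using Rpoly_Rinterp by (simp add: Rinterp_def)

lemma degree_Rpoly: "degree (Rpoly k) \<le> 2 * k"
  by (rule pweight_le_degree[OF pweight_le_Rpoly])

lemma Rpoly_0: "Rpoly 0 = 1"
  by (rule qpoly_poly_eqI_on_ints) (simp add: poly_Rpoly Rcoeff_0)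

lemma fdiff_Rpoly: assumes "k \<ge> 1" shows "fdiff (Rpoly k) = Rdiff Rpoly k"
proof (rule qpoly_poly_eqI_on_ints)
  fix j :: int
  have "poly (fdiff (Rpoly k)) (of_int j) = Rcoeff k (j + 1) - Rcoeff k j"
    using poly_Rpoly[of k "j + 1"] by (simp add: poly_fdiff poly_Rpoly)
  also have "\<dots> = poly (Rdiff Rpoly k) (of_int j)"
    by (rule Rcoeff_fdiff[OF assms]) (rule poly_Rpoly)
  finally show "poly (fdiff (Rpoly k)) (of_int j) = poly (Rdiff Rpoly k) (of_int j)" .
qed

section \<open>The two top coefficients of rho_k\<close>

definition Rlead :: "nat \<Rightarrow> rat" where
  "Rlead k = (-1) ^ k / (2 ^ k * fact k)"

definition Rsublead :: "nat \<Rightarrow> rat" where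
  "Rsublead k = Rlead k * of_nat k * (2 * of_nat k - 5) / 3"

lemma Rlead_Suc: "of_nat (Suc k) * Rlead (Suc k) = - Rlead k / 2"
  unfolding Rlead_def fact_Suc of_nat_mult by (simp add: field_simps del: of_nat_Suc)

lemma Rsublead_Suc:
  "of_nat (2 * Suc k - 1) * Rsublead (Suc k) + of_nat (Suc k * (2 * Suc k - 1)) * Rlead (Suc k)
     = - (Rsublead k + of_nat (2 * k) * Rlead k)"
proof -
  have "of_nat (2 * Suc k - 1) * Rsublead (Suc k) + of_nat (Suc k * (2 * Suc k - 1)) * Rlead (Suc k)
      = (2 * of_nat k + 1) * (2 * of_nat k) / 3 * (of_nat (Suc k) * Rlead (Suc k))"
    by (simp add: Rsublead_def of_nat_diff field_simps del: of_nat_Suc) (simp add: algebra_simps)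
  thus ?thesis by (simp add: Rlead_Suc Rsublead_def field_simps del: of_nat_Suc)
qed

lemma coeff_Rdiff_Rpoly:
  assumes "K \<ge> 1" "2 * K < e + 4"
  shows "coeff (Rdiff Rpoly K) e =
    (if e = 0 then 0 else - coeff (pcompose (Rpoly (K - 1)) [:1, 1:]) (e - 1))"
proof -
  have "coeff ([:mvar (t - 2):] * Rpoly (K - t)) e = 0" if "t \<in> {2..K}" for t
  proof -
    have "degree (Rpoly (K - t)) < e" using degree_Rpoly[of "K - t"] that assms by auto
    thus ?thesis by (simp add: coeff_eq_0)
  qed
  hence "coeff (\<Sum>t\<in>{2..K}. [:mvar (t - 2):] * Rpoly (K - t)) e = 0"
    unfolding coeff_sum by (rule sum.neutral[OF ballI])
  thus ?thesis unfolding Rdiff_def by (simp add: coeff_pCons split: nat.splits)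
qed

lemma coeff_Rpoly_lead: "coeff (Rpoly k) (2 * k) = mconst (Rlead k)"
proof (induction k)
  case 0 thus ?case by (simp add: Rpoly_0 Rlead_def)
next
  case (Suc k)
  have "of_nat (2 * Suc k) * coeff (Rpoly (Suc k)) (2 * Suc k) = coeff (fdiff (Rpoly (Suc k))) (Suc (2 * k))"
    using coeff_fdiff_top[of "Rpoly (Suc k)" "Suc (2 * k)"] degree_Rpoly[of "Suc k"]
    by (simp add: coeff_eq_0)
  also have "\<dots> = - coeff (pcompose (Rpoly k) [:1, 1:]) (2 * k)"
    by (simp add: fdiff_Rpoly coeff_Rdiff_Rpoly)
  also have "\<dots> = - mconst (Rlead k)"
    using coeff_pcompose_X_plus_1_top[of "Rpoly k" "2 * k"] degree_Rpoly[of k] Suc.IH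
    by (simp add: coeff_eq_0)
  also have "\<dots> = of_nat (2 * Suc k) * mconst (Rlead (Suc k))"
  proof -
    have "of_nat (2 * Suc k) * Rlead (Suc k) = - Rlead k"
      by (simp only: of_nat_mult mult.assoc Rlead_Suc)
    thus ?thesis by (metis mconst_mult mconst_of_nat mconst_uminus)
  qed
  finally show ?case by (rule of_nat_mult_cancel_qpoly) simp
qed

lemma coeff_Rpoly_sublead: "k \<ge> 1 \<Longrightarrow> coeff (Rpoly k) (2 * k - 1) = mconst (Rsublead k)"
proof (induction k)
  case (Suc k)
  have "coeff (Rdiff Rpoly (Suc k)) (2 * k) = - (mconst (Rsublead k) + of_nat (2 * k) * mconst (Rlead k))"
  proof (cases "k = 0")
    case False
    have "coeff (Rdiff Rpoly (Suc k)) (2 * k) = - coeff (pcompose (Rpoly k) [:1, 1:]) (2 * k - 1)"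
      using False by (simp add: coeff_Rdiff_Rpoly)
    also have "\<dots> = - (coeff (Rpoly k) (2 * k - 1) + of_nat (2 * k) * coeff (Rpoly k) (2 * k))"
      using coeff_pcompose_X_plus_1_top[of "Rpoly k" "2 * k - 1"] degree_Rpoly[of k] False
      by (simp add: coeff_eq_0)
    finally show ?thesis using Suc.IH False by (simp add: coeff_Rpoly_lead)
  qed (simp add: coeff_Rdiff_Rpoly Rsublead_def)
  moreover have "coeff (fdiff (Rpoly (Suc k))) (2 * k) =
      of_nat (2 * Suc k - 1) * coeff (Rpoly (Suc k)) (2 * Suc k - 1)
      + of_nat (Suc k * (2 * Suc k - 1)) * mconst (Rlead (Suc k))"
  proof -
    have "(Suc (Suc (2 * k)) choose 2 * k) = Suc k * (2 * Suc k - 1)"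
      using binomial_symmetric[of 2 "Suc (Suc (2 * k))"] by (simp add: choose_two)
    thus ?thesis
      using coeff_fdiff_top[of "Rpoly (Suc k)" "2 * k"] degree_Rpoly[of "Suc k"]
      by (simp add: coeff_Rpoly_lead[of "Suc k", simplified])
  qed
  ultimately have "of_nat (2 * Suc k - 1) * coeff (Rpoly (Suc k)) (2 * Suc k - 1) =
      - (mconst (Rsublead k) + of_nat (2 * k) * mconst (Rlead k))
      - of_nat (Suc k * (2 * Suc k - 1)) * mconst (Rlead (Suc k))"
    by (simp add: fdiff_Rpoly eq_diff_eq)
  also have "\<dots> = of_nat (2 * Suc k - 1) * mconst (Rsublead (Suc k))"
    using Rsublead_Suc[of k]
    by (simp only: eq_diff_eq[symmetric] mconst_diff[symmetric] mconst_uminus[symmetric]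
        mconst_add[symmetric] mconst_mult[symmetric] mconst_of_nat[symmetric])
  finally show ?case by (rule of_nat_mult_cancel_qpoly) simp
qed simp

section \<open>Antisymmetrization: x^e - (1 - x)^e\<close>

text \<open>With y = 1 - x one has x + y = 1 and - x y = x (x - 1), so the identity
  x^(e+2) - y^(e+2) = (x + y) (x^(e+1) - y^(e+1)) - x y (x^e - y^e) yields the recursion of asym.\<close>

fun asym :: "nat \<Rightarrow> nat \<Rightarrow> int" where
  "asym 0 i = 0"
| "asym (Suc 0) i = (if i = 0 then 1 else 0)"
| "asym (Suc (Suc e)) i = asym (Suc e) i + (if i = 0 then 0 else asym e (i - 1))"

lemma asym_nonzero_le: "asym e i \<noteq> 0 \<Longrightarrow> 2 * i + 1 \<le> e"
proof (induction e i rule: asym.induct)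
  case (3 e i)
  show ?case
  proof (cases "asym (Suc e) i = 0")
    case True
    hence "i \<noteq> 0" "asym e (i - 1) \<noteq> 0" using "3.prems" by (auto split: if_splits)
    thus ?thesis using "3.IH"(2) by auto
  next
    case False thus ?thesis using "3.IH"(1) by auto
  qed
qed (auto split: if_splits)

lemma asym_odd_top: "asym (Suc (2 * k)) k = 1"
proof (induction k)
  case 0 thus ?case by simp
next
  case (Suc k)
  have z: "asym (Suc (Suc (2 * k))) (Suc k) = 0" using asym_nonzero_le[of "Suc (Suc (2 * k))" "Suc k"] by force
  have "asym (Suc (2 * Suc k)) (Suc k) = asym (Suc (Suc (Suc (2 * k)))) (Suc k)" by simp
  also have "\<dots> = asym (Suc (Suc (2 * k))) (Suc k) + asym (Suc (2 * k)) k" by simp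
  finally show ?case using z Suc.IH by simp
qed

lemma asym_even_top: "asym (Suc (Suc (2 * k))) k = int k + 1"
proof (induction k)
  case 0 thus ?case by simp
next
  case (Suc k)
  have "asym (Suc (Suc (2 * Suc k))) (Suc k) = asym (Suc (Suc (Suc (Suc (2 * k))))) (Suc k)" by simp
  also have "\<dots> = asym (Suc (2 * Suc k)) (Suc k) + asym (Suc (Suc (2 * k))) k" by simp
  also have "asym (Suc (2 * Suc k)) (Suc k) = 1" by (rule asym_odd_top)
  finally show ?case using Suc.IH by simp
qed

definition asym_poly :: "nat \<Rightarrow> 'a :: comm_ring_1 \<Rightarrow> 'a" where
  "asym_poly e y = (\<Sum>i\<le>e. of_int (asym e i) * y ^ i)"

lemma asym_poly_rec: "asym_poly (Suc (Suc e)) y = asym_poly (Suc e) y + y * asym_poly e y"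
proof -
  have "asym_poly (Suc (Suc e)) y = (\<Sum>i\<le>Suc (Suc e). of_int (asym (Suc e) i) * y ^ i)
      + (\<Sum>i\<le>Suc (Suc e). of_int (if i = 0 then 0 else asym e (i - 1)) * y ^ i)"
    by (simp add: asym_poly_def sum.distrib algebra_simps)
  also have "(\<Sum>i\<le>Suc (Suc e). of_int (asym (Suc e) i) * y ^ i) = asym_poly (Suc e) y"
  proof -
    have "asym (Suc e) (Suc (Suc e)) = 0" using asym_nonzero_le[of "Suc e" "Suc (Suc e)"] by force
    thus ?thesis by (simp add: asym_poly_def)
  qed
  also have "(\<Sum>i\<le>Suc (Suc e). of_int (if i = 0 then 0 else asym e (i - 1)) * y ^ i)
      = (\<Sum>i\<le>Suc e. of_int (asym e i) * y ^ Suc i)"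
    by (subst sum.atMost_Suc_shift) simp
  also have "\<dots> = y * asym_poly e y"
  proof -
    have "asym e (Suc e) = 0" using asym_nonzero_le[of e "Suc e"] by force
    thus ?thesis by (simp add: asym_poly_def sum_distrib_left algebra_simps)
  qed
  finally show ?thesis .
qed

lemma power_diff_one_minus_power: "x ^ e - (1 - x) ^ e = (2 * x - 1) * asym_poly e (x * (x - 1))"
proof (induction e rule: less_induct)
  case (less e)
  show ?case
  proof (cases e)
    case 0 thus ?thesis by (simp add: asym_poly_def)
  next
    case (Suc e1)
    show ?thesis
    proof (cases e1)
      case 0 thus ?thesis using Suc by (simp add: asym_poly_def)
    next
      case (Suc e2)
      have "x ^ Suc (Suc e2) - (1 - x) ^ Suc (Suc e2) =
            (x ^ Suc e2 - (1 - x) ^ Suc e2) + x * (x - 1) * (x ^ e2 - (1 - x) ^ e2)"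
        by (simp add: algebra_simps)
      also have "\<dots> = (2 * x - 1) * asym_poly (Suc e2) (x * (x - 1)) + x * (x - 1) * ((2 * x - 1) * asym_poly e2 (x * (x - 1)))"
        using less.IH[of "Suc e2"] less.IH[of e2] \<open>e = Suc e1\<close> Suc by simp
      also have "\<dots> = (2 * x - 1) * asym_poly (Suc (Suc e2)) (x * (x - 1))"
        by (simp only: asym_poly_rec algebra_simps)
      finally show ?thesis using \<open>e = Suc e1\<close> Suc by simp
    qed
  qed
qed

section \<open>The polynomial Q with G - H = Q(j) - Q(1 - j)\<close>

lemma Gser_Rser: assumes "j \<ge> 1" shows "Gser j = Rser j"
proof -
  have im: "{0..j-1} = int ` {..<nat j}"
  proof
    show "{0..j - 1} \<subseteq> int ` {..<nat j}"
    proof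
      fix x assume "x \<in> {0..j-1}"
      hence "x = int (nat x)" "nat x < nat j" by auto
      thus "x \<in> int ` {..<nat j}" by blast
    qed
  qed auto
  have "Gser j = (\<Prod>i\<in>{0..j-1}. Aser) * (\<Prod>i\<in>{0..j-1}. finv (onepl i))"
    by (simp add: Gser_def prod.distrib)
  also have "(\<Prod>i\<in>{0..j-1}. Aser) = Aser ^ nat j" using assms by simp
  also have "(\<Prod>i\<in>{0..j-1}. finv (onepl i)) = (\<Prod>i<nat j. finv (onepl (int i)))"
    unfolding im by (subst prod.reindex) (auto simp: inj_on_def)
  finally show ?thesis using assms by (simp add: Rser_def)
qed

lemma Hser_Rser: assumes "j \<ge> 1" shows "Hser j = Rser (1 - j)"
proof -
  have im: "{1-j..-1} = (\<lambda>i. - int i) ` {1..nat (j - 1)}"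
  proof
    show "{1-j..-1} \<subseteq> (\<lambda>i. - int i) ` {1..nat (j - 1)}"
    proof
      fix x assume "x \<in> {1-j..-1}"
      hence "x = - int (nat (-x))" "nat (-x) \<in> {1..nat (j - 1)}" by auto
      thus "x \<in> (\<lambda>i. - int i) ` {1..nat (j - 1)}" by blast
    qed
  qed auto
  have "Hser j = (\<Prod>i\<in>{1-j..-1}. onepl i) * (\<Prod>i\<in>{1-j..-1}. finv Aser)"
    by (simp add: Hser_def prod.distrib)
  also have "(\<Prod>i\<in>{1-j..-1}. finv Aser) = finv Aser ^ nat (j - 1)" by simp
  also have "(\<Prod>i\<in>{1-j..-1}. onepl i) = (\<Prod>i\<in>{1..nat (j - 1)}. onepl (- int i))"
    unfolding im by (subst prod.reindex) (auto simp: inj_on_def)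
  finally have H: "Hser j = (\<Prod>i\<in>{1..nat (j - 1)}. onepl (- int i)) * finv Aser ^ nat (j - 1)" .
  show ?thesis
  proof (cases "j = 1")
    case True thus ?thesis using H by (simp add: Rser_def)
  next
    case False
    hence "\<not> 0 \<le> 1 - j" "nat (- (1 - j)) = nat (j - 1)" using assms by auto
    thus ?thesis using H by (simp add: Rser_def)
  qed
qed

definition Qpoly :: "nat \<Rightarrow> qpoly poly" where
  "Qpoly n = (\<Sum>i\<in>{0..n-1}. [:Aser $ (n - 1 - i):] * Rpoly (i + 2))"

lemma GHcoeff_Qpoly:
  assumes "j \<ge> 1"
  shows "GHcoeff j n = poly (Qpoly n) (of_int j) - poly (Qpoly n) (of_int (1 - j))"
proof -
  have "GHcoeff j n = (\<Sum>i=0..n-1. (Gser j - Hser j) $ (i + 2) * Aser $ (n - 1 - i))"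
    by (simp add: GHcoeff_def fps_mult_nth)
  also have "\<dots> = (\<Sum>i=0..n-1. Aser $ (n - 1 - i) * (poly (Rpoly (i + 2)) (of_int j) - poly (Rpoly (i + 2)) (of_int (1 - j))))"
    using assms by (simp add: Gser_Rser Hser_Rser poly_Rpoly Rcoeff_def mult.commute del: of_int_diff)
  also have "\<dots> = poly (Qpoly n) (of_int j) - poly (Qpoly n) (of_int (1 - j))"
    by (simp add: Qpoly_def poly_sum sum_subtractf algebra_simps del: of_int_diff)
  finally show ?thesis .
qed

lemma weight_le_Aser: "weight_le (2 * t) (Aser $ t)"
proof -
  consider "t = 0" | "t = 1" | "t \<ge> 2" by linarith
  thus ?thesis
  proof cases
    case 3
    have "weight_le (2 * (t - 2) + 3) (mvar (t - 2))" by (rule weight_le_mvar)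
    thus ?thesis using 3 by (simp add: Aser_nth) (rule weight_le_mono, auto)
  qed (auto simp: Aser_nth)
qed

lemma pweight_le_Qpoly: assumes n: "n \<ge> 1" shows "pweight_le (2 * n + 2) (Qpoly n)"
  unfolding Qpoly_def
proof (rule pweight_le_sum)
  fix i assume i: "i \<in> {0..n-1}"
  have "pweight_le (2 * (n - 1 - i) + 2 * (i + 2)) ([:Aser $ (n - 1 - i):] * Rpoly (i + 2))"
    by (intro pweight_le_mult pweight_le_const weight_le_Aser pweight_le_Rpoly)
  thus "pweight_le (2 * n + 2) ([:Aser $ (n - 1 - i):] * Rpoly (i + 2))"
    by (rule pweight_le_mono) (use i n in auto)
qed

definition Tcoeff :: "nat \<Rightarrow> nat \<Rightarrow> qpoly" where
  "Tcoeff n i = (\<Sum>e\<le>2 * n + 2. coeff (Qpoly n) e * of_int (asym e i))"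

lemma poly_altdef_le_degree:
  fixes p :: "'a :: comm_semiring_1 poly"
  assumes "degree p \<le> N" shows "poly p x = (\<Sum>i\<le>N. coeff p i * x ^ i)"
  unfolding poly_altdef
  by (rule sum.mono_neutral_left) (use assms in \<open>auto simp: coeff_eq_0\<close>)

lemma sum_atMost_eq_by_support:
  fixes g :: "nat \<Rightarrow> 'a :: comm_monoid_add"
  assumes "\<And>i. g i \<noteq> 0 \<Longrightarrow> i \<le> a \<and> i \<le> b"
  shows "(\<Sum>i\<le>a. g i) = (\<Sum>i\<le>b. g i)"
proof -
  have "(\<Sum>i\<le>a. g i) = (\<Sum>i\<in>{..a} \<inter> {..b}. g i)"
    by (rule sum.mono_neutral_right) (use assms in auto)
  also have "\<dots> = (\<Sum>i\<le>b. g i)"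
    by (rule sum.mono_neutral_left) (use assms in auto)
  finally show ?thesis .
qed

lemma Qpoly_decomp:
  fixes x :: qpoly
  assumes n: "n \<ge> 1"
  shows "poly (Qpoly n) x - poly (Qpoly n) (1 - x) = (2 * x - 1) * (\<Sum>i\<le>n. Tcoeff n i * (x * (x - 1)) ^ i)"
proof -
  define N where "N = 2 * n + 2"
  define v where "v = x * (x - 1)"
  have dq: "degree (Qpoly n) \<le> N" using pweight_le_degree[OF pweight_le_Qpoly[OF n]] N_def by simp
  have "poly (Qpoly n) x - poly (Qpoly n) (1 - x) = (\<Sum>e\<le>N. coeff (Qpoly n) e * (x ^ e - (1 - x) ^ e))"
    by (simp add: poly_altdef_le_degree[OF dq] sum_subtractf algebra_simps)
  also have "\<dots> = (\<Sum>e\<le>N. coeff (Qpoly n) e * ((2 * x - 1) * asym_poly e v))"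
    by (simp add: power_diff_one_minus_power v_def)
  also have "\<dots> = (\<Sum>e\<le>N. coeff (Qpoly n) e * ((2 * x - 1) * (\<Sum>i\<le>n. of_int (asym e i) * v ^ i)))"
  proof (rule sum.cong[OF refl])
    fix e assume e: "e \<in> {..N}"
    have "asym_poly e v = (\<Sum>i\<le>n. of_int (asym e i) * v ^ i)"
      unfolding asym_poly_def
    proof (rule sum_atMost_eq_by_support)
      fix i assume "of_int (asym e i) * v ^ i \<noteq> 0"
      hence "asym e i \<noteq> 0" by auto
      from asym_nonzero_le[OF this] e show "i \<le> e \<and> i \<le> n" by (auto simp: N_def)
    qed
    thus "coeff (Qpoly n) e * ((2 * x - 1) * asym_poly e v) = coeff (Qpoly n) e * ((2 * x - 1) * (\<Sum>i\<le>n. of_int (asym e i) * v ^ i))"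
      by simp
  qed
  also have "\<dots> = (2 * x - 1) * (\<Sum>i\<le>n. (\<Sum>e\<le>N. coeff (Qpoly n) e * of_int (asym e i)) * v ^ i)"
    by (simp add: sum_distrib_left sum_distrib_right algebra_simps sum.swap[of _ "{..N}"])
  finally show ?thesis by (simp add: Tcoeff_def N_def v_def)
qed

lemma weight_le_Tcoeff: assumes "i \<le> n" and n: "n \<ge> 1" shows "weight_le (2 * n + 1 - 2 * i) (Tcoeff n i)"
  unfolding Tcoeff_def
proof (rule weight_le_sum)
  fix e assume e: "e \<in> {..2 * n + 2}"
  show "weight_le (2 * n + 1 - 2 * i) (coeff (Qpoly n) e * of_int (asym e i))"
  proof (cases "asym e i = 0")
    case False
    from asym_nonzero_le[OF this] have ei: "2 * i + 1 \<le> e" .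
    have "weight_le (2 * n + 2 - e) (coeff (Qpoly n) e)" by (rule pweight_le_coeff[OF pweight_le_Qpoly[OF n]]) (use e in auto)
    hence "weight_le (2 * n + 2 - e + 0) (coeff (Qpoly n) e * of_int (asym e i))" by (rule weight_le_mult) simp
    thus ?thesis by (rule weight_le_mono) (use ei e in auto)
  qed simp
qed

lemma coeff_Qpoly:
  assumes n: "n \<ge> 1" and e: "e \<ge> 2 * n + 1"
  shows "coeff (Qpoly n) e = coeff (Rpoly (n + 1)) e"
proof -
  have "coeff (Qpoly n) e = (\<Sum>i\<in>{0..n-1}. Aser $ (n - 1 - i) * coeff (Rpoly (i + 2)) e)"
    by (simp add: Qpoly_def coeff_sum)
  also have "{0..n-1} = insert (n - 1) {0..<n-1}" using n by auto
  also have "(\<Sum>i\<in>insert (n - 1) {0..<n-1}. Aser $ (n - 1 - i) * coeff (Rpoly (i + 2)) e)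
      = Aser $ 0 * coeff (Rpoly (n + 1)) e + (\<Sum>i\<in>{0..<n-1}. Aser $ (n - 1 - i) * coeff (Rpoly (i + 2)) e)"
    using n by (simp add: sum.insert)
  also have "(\<Sum>i\<in>{0..<n-1}. Aser $ (n - 1 - i) * coeff (Rpoly (i + 2)) e) = 0"
  proof (rule sum.neutral, rule ballI)
    fix i assume i: "i \<in> {0..<n-1}"
    have "degree (Rpoly (i + 2)) < e" using degree_Rpoly[of "i + 2"] i e by auto
    thus "Aser $ (n - 1 - i) * coeff (Rpoly (i + 2)) e = 0" by (simp add: coeff_eq_0)
  qed
  finally show ?thesis by (simp add: Aser_nth)
qed

lemma Tcoeff_top:
  assumes n: "n \<ge> 1"
  shows "Tcoeff n n = mconst (Rsublead (n + 1) + of_nat (n + 1) * Rlead (n + 1))"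
proof -
  define f where "f e = coeff (Qpoly n) e * of_int (asym e n)" for e
  have "{..2 * n + 2} = {..<2 * n + 1} \<union> {2 * n + 1, 2 * n + 2}" by auto
  hence "Tcoeff n n = (\<Sum>e\<in>{..<2 * n + 1}. f e) + (\<Sum>e\<in>{2 * n + 1, 2 * n + 2}. f e)"
    by (simp add: Tcoeff_def f_def sum.union_disjoint)
  also have "(\<Sum>e\<in>{..<2 * n + 1}. f e) = 0"
  proof (rule sum.neutral, rule ballI)
    fix e assume "e \<in> {..<2 * n + 1}"
    hence "asym e n = 0" using asym_nonzero_le[of e n] by force
    thus "f e = 0" by (simp add: f_def)
  qed
  also have "(\<Sum>e\<in>{2 * n + 1, 2 * n + 2}. f e) = f (2 * n + 1) + f (2 * n + 2)" by simp
  also have "f (2 * n + 1) = mconst (Rsublead (n + 1))"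
  proof -
    have "asym (2 * n + 1) n = 1" using asym_odd_top[of n] by simp
    moreover have "coeff (Qpoly n) (2 * n + 1) = coeff (Rpoly (n + 1)) (2 * (n + 1) - 1)"
      using coeff_Qpoly[OF n, of "2 * n + 1"] by simp
    ultimately show ?thesis using coeff_Rpoly_lead[of "n + 1"] coeff_Rpoly_sublead[of "n + 1"] by (simp add: f_def)
  qed
  also have "f (2 * n + 2) = mconst (Rlead (n + 1)) * of_int (int n + 1)"
  proof -
    have "asym (2 * n + 2) n = int n + 1" using asym_even_top[of n] by simp
    moreover have "coeff (Qpoly n) (2 * n + 2) = coeff (Rpoly (n + 1)) (2 * (n + 1))"
      using coeff_Qpoly[OF n, of "2 * n + 2"] by simp
    ultimately show ?thesis using coeff_Rpoly_lead[of "n + 1"] coeff_Rpoly_sublead[of "n + 1"] by (simp add: f_def)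
  qed
  finally show ?thesis
    by (simp add: mconst_add mconst_mult mconst_of_nat mult.commute)
qed

section \<open>The polynomials S_i(n)\<close>

lemma weight_single_pred: "n \<ge> 1 \<Longrightarrow> weight (Poly_Mapping.single (n - 1) 1) = 2 * n + 1"
  by (subst weight_single) simp

lemma lookup_coeff_Rdiff_Rpoly_0:
  assumes n: "n \<ge> 1"
  shows "lk (coeff (Rdiff Rpoly (n + 1)) 0) (Poly_Mapping.single (n - 1) 1) = 1"
proof -
  let ?\<mu> = "Poly_Mapping.single (n - 1) (1::nat)"
  let ?f = "\<lambda>t. lk (mvar (t - 2) * coeff (Rpoly (n + 1 - t)) 0) ?\<mu>"
  have "coeff (Rdiff Rpoly (n + 1)) 0 = (\<Sum>t\<in>{2..n+1}. mvar (t - 2) * coeff (Rpoly (n + 1 - t)) 0)"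
    unfolding Rdiff_def coeff_add coeff_minus coeff_pCons by (simp add: coeff_sum)
  hence "lk (coeff (Rdiff Rpoly (n + 1)) 0) ?\<mu> = (\<Sum>t\<in>{2..n+1}. ?f t)"
    by (simp only: lookup_sum)
  also have "\<dots> = (\<Sum>t\<in>{n+1}. ?f t)"
  proof (rule sum.mono_neutral_right)
    show "\<forall>t\<in>{2..n + 1} - {n + 1}. ?f t = 0"
    proof
      fix t assume "t \<in> {2..n + 1} - {n + 1}"
      hence "t - 2 \<noteq> n - 1" using n by auto
      thus "?f t = 0" by (rule lookup_mvar_mult_single)
    qed
  qed (use n in auto)
  finally show ?thesis using n by (simp add: Rpoly_0 mvar_def)
qed

lemma lookup_coeff_Rpoly_1_mvar:
  assumes n: "n \<ge> 1"
  shows "lk (coeff (Rpoly (n + 1)) 1) (Poly_Mapping.single (n - 1) 1) = 1"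
proof -
  let ?\<mu> = "Poly_Mapping.single (n - 1) (1::nat)"
  have "lk (coeff (fdiff (Rpoly (n + 1))) 0) ?\<mu> = (\<Sum>i=1..2 * (n + 1). lk (coeff (Rpoly (n + 1)) i) ?\<mu>)"
    by (simp only: coeff_fdiff_0[OF degree_Rpoly] lookup_sum)
  also have "\<dots> = (\<Sum>i\<in>{1}. lk (coeff (Rpoly (n + 1)) i) ?\<mu>)"
  proof (rule sum.mono_neutral_right)
    show "\<forall>i\<in>{1..2 * (n + 1)} - {1}. lk (coeff (Rpoly (n + 1)) i) ?\<mu> = 0"
      using pweight_le_Rpoly[of "n + 1"] weight_single_pred[OF n]
      by (auto intro!: lookup_coeff_pweight_le_eq_0)
  qed auto
  finally show ?thesis using lookup_coeff_Rdiff_Rpoly_0[OF n] by (simp add: fdiff_Rpoly)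
qed

lemma lookup_coeff_Qpoly_1_mvar:
  assumes n: "n \<ge> 1"
  shows "lk (coeff (Qpoly n) 1) (Poly_Mapping.single (n - 1) 1) = 1"
proof -
  let ?\<mu> = "Poly_Mapping.single (n - 1) (1::nat)"
  let ?f = "\<lambda>i. lk (Aser $ (n - 1 - i) * coeff (Rpoly (i + 2)) 1) ?\<mu>"
  have "lk (coeff (Qpoly n) 1) ?\<mu> = (\<Sum>i\<in>{0..n-1}. ?f i)"
    by (simp add: Qpoly_def coeff_sum lookup_sum)
  also have "\<dots> = (\<Sum>i\<in>{n-1}. ?f i)"
  proof (rule sum.mono_neutral_right)
    have "?f i = 0" if "i < n - 1" for i
    proof (cases "n - 1 - i = 1")
      case False
      hence "Aser $ (n - 1 - i) = mvar (n - 1 - i - 2)" using that by (simp add: Aser_nth)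
      moreover have "n - 1 - i - 2 \<noteq> n - 1" using that False by auto
      ultimately show ?thesis using lookup_mvar_mult_single by metis
    qed (simp add: Aser_nth)
    thus "\<forall>i\<in>{0..n-1} - {n-1}. ?f i = 0" by auto
  qed auto
  finally show ?thesis using lookup_coeff_Rpoly_1_mvar[OF n] n by (simp add: Aser_nth)
qed

text \<open>This is the origin of the summand a_(n-1) in the defining identity of the S_i(n).\<close>

lemma lookup_Tcoeff_0_mvar:
  assumes n: "n \<ge> 1"
  shows "lk (Tcoeff n 0) (Poly_Mapping.single (n - 1) 1) = 1"
proof -
  let ?\<mu> = "Poly_Mapping.single (n - 1) (1::nat)"
  let ?f = "\<lambda>e. of_int (asym e 0) * lk (coeff (Qpoly n) e) ?\<mu>"
  have "lk (Tcoeff n 0) ?\<mu> = (\<Sum>e\<le>2 * n + 2. ?f e)"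
    by (simp only: Tcoeff_def lookup_sum lookup_mult_of_int)
  also have "\<dots> = (\<Sum>e\<in>{1}. ?f e)"
  proof (rule sum.mono_neutral_right)
    show "\<forall>e\<in>{..2 * n + 2} - {1}. ?f e = 0"
      using pweight_le_Qpoly[OF n] weight_single_pred[OF n]
      by (auto intro!: lookup_coeff_pweight_le_eq_0 dest: asym_nonzero_le)
  qed auto
  finally show ?thesis using lookup_coeff_Qpoly_1_mvar[OF n] by simp
qed

definition Sexpl :: "nat \<Rightarrow> nat \<Rightarrow> qpoly" where
  "Sexpl n i = (if i = 0 then Tcoeff n 0 - mvar (n - 1) else if i \<le> n then Tcoeff n i else 0)"

lemma mvars_Sexpl:
  assumes n: "n \<ge> 1" and i: "i \<le> n"
  shows "mvars (Sexpl n i) \<subseteq> {..<n-1}"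
proof
  fix k assume "k \<in> mvars (Sexpl n i)"
  then obtain m where m: "m \<in> ks (Sexpl n i)" "k \<in> ks m" by (auto simp: mvars_def)
  show "k \<in> {..<n-1}"
  proof (cases "i = 0")
    case False
    hence "m \<in> ks (Tcoeff n i)" using m i by (simp add: Sexpl_def)
    from weight_le_var_bound[OF weight_le_Tcoeff[OF i n] this m(2)] False i show ?thesis by auto
  next
    case True
    define \<mu> where "\<mu> = Poly_Mapping.single (n - 1) (1::nat)"
    have m0: "m \<in> ks (Tcoeff n 0 - mvar (n - 1))" using m True by (simp add: Sexpl_def)
    hence "m \<noteq> \<mu>"
      using lookup_Tcoeff_0_mvar[OF n] by (auto simp: \<mu>_def lookup_minus mvar_def in_keys_iff)
    hence mT: "m \<in> ks (Tcoeff n 0)"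
      using m0 by (simp add: mvar_def \<mu>_def in_keys_iff lookup_minus lookup_single)
    have wT: "weight_le (2 * (n - 1) + 3) (Tcoeff n 0)"
    proof -
      have "2 * n + 1 - 2 * 0 = 2 * (n - 1) + 3" using n by simp
      thus ?thesis using weight_le_Tcoeff[OF le0 n] by metis
    qed
    have "weight m \<le> 2 * (n - 1) + 3" using wT mT by (simp add: weight_le_def)
    hence "k \<noteq> n - 1" using weight_le_single_key[OF m(2)] \<open>m \<noteq> \<mu>\<close> by (auto simp: \<mu>_def)
    moreover have "2 * k + 3 \<le> 2 * (n - 1) + 3" by (rule weight_le_var_bound[OF wT mT m(2)])
    ultimately show ?thesis by simp
  qed
qed

lemma Sexpl_eq:
  assumes n: "n \<ge> 1" and j: "j \<ge> 1"
  shows "GHcoeff j n = of_int (2*j - 1) *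
          (mvar (n-1) + Sexpl n 0 + (\<Sum>i=1..n. Sexpl n i * of_int (j*(j-1)) ^ i))"
proof -
  define x :: qpoly where "x = of_int j"
  have "GHcoeff j n = poly (Qpoly n) x - poly (Qpoly n) (1 - x)"
    using GHcoeff_Qpoly[OF j, of n] by (simp add: x_def)
  also have "\<dots> = (2 * x - 1) * (\<Sum>i\<le>n. Tcoeff n i * (x * (x - 1)) ^ i)" by (rule Qpoly_decomp[OF n])
  also have "(\<Sum>i\<le>n. Tcoeff n i * (x * (x - 1)) ^ i) = Tcoeff n 0 + (\<Sum>i=1..n. Tcoeff n i * (x * (x - 1)) ^ i)"
  proof -
    have "{..n} = insert 0 {1..n}" by auto
    thus ?thesis by (simp add: sum.insert)
  qed
  also have "(\<Sum>i=1..n. Tcoeff n i * (x * (x - 1)) ^ i) = (\<Sum>i=1..n. Sexpl n i * of_int (j*(j-1)) ^ i)"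
    by (rule sum.cong) (auto simp: Sexpl_def x_def)
  also have "Tcoeff n 0 = mvar (n-1) + Sexpl n 0" by (simp add: Sexpl_def)
  also have "2 * x - 1 = of_int (2*j - 1)" by (simp add: x_def)
  finally show ?thesis by (simp add: add.assoc)
qed

lemma Sexpl_spec: assumes n: "n \<ge> 1" shows "S_spec n (Sexpl n)"
  unfolding S_spec_def using mvars_Sexpl[OF n] Sexpl_eq[OF n] by (auto simp: Sexpl_def)

lemma rat_poly_eq_0_on_pronics:
  fixes P :: "rat poly"
  assumes "\<And>j::int. j \<ge> 1 \<Longrightarrow> poly P (of_int (j * (j - 1))) = 0"
  shows "P = 0"
proof (rule ccontr)
  assume "P \<noteq> 0"
  hence fin: "finite {x. poly P x = 0}" by (rule poly_roots_finite)
  define f where "f j = (of_int (j * (j - 1)) :: rat)" for j :: int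
  have "f ` {1..} \<subseteq> {x. poly P x = 0}" using assms by (auto simp: f_def)
  hence "finite (f ` {1..})" using fin finite_subset by blast
  moreover have "inj_on f {1..}"
  proof
    fix a b :: int assume ab: "a \<in> {1..}" "b \<in> {1..}" "f a = f b"
    hence "a * (a - 1) = b * (b - 1)" by (simp only: f_def of_int_eq_iff)
    hence "(a - b) * (a + b - 1) = 0" by (simp add: algebra_simps)
    thus "a = b" using ab by auto
  qed
  ultimately have "finite ({1..} :: int set)" using finite_imageD by blast
  thus False using infinite_Ici[of "1::int"] by simp
qed

lemma qpoly_coeffs_eq_0_on_pronics:
  fixes D :: "nat \<Rightarrow> qpoly"
  assumes "\<And>j::int. j \<ge> 1 \<Longrightarrow> (\<Sum>i\<le>n. D i * of_int (j * (j - 1)) ^ i) = 0" "i \<le> n"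
  shows "D i = 0"
proof (rule poly_mapping_eqI)
  fix m
  define P where "P = (\<Sum>i\<le>n. monom (lk (D i) m) i)"
  have "lk (D i * of_int v ^ i) m = lk (D i) m * of_int v ^ i" for i v
    by (metis lookup_mult_of_int mult.commute of_int_power)
  hence hv: "poly P (of_int v) = lk (\<Sum>i\<le>n. D i * of_int v ^ i) m" for v
    by (simp add: P_def lookup_sum poly_sum poly_monom)
  have "P = 0"
    by (rule rat_poly_eq_0_on_pronics) (simp only: hv assms(1) lookup_zero)
  moreover have "coeff P i = lk (D i) m" using assms(2) by (simp add: P_def coeff_sum coeff_monom)
  ultimately show "lk (D i) m = lk 0 m" by simp
qed

lemma S_spec_unique:
  assumes n: "n \<ge> 1" and S1: "S_spec n S1" and S2: "S_spec n S2"
  shows "S1 = S2"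
proof
  fix i
  have "(\<Sum>i\<le>n. (S1 i - S2 i) * of_int (j * (j - 1)) ^ i) = 0" if j: "j \<ge> 1" for j :: int
  proof -
    define A where "A S = mvar (n-1) + S 0 + (\<Sum>i=1..n. S i * (of_int (j*(j-1)) :: qpoly) ^ i)"
      for S :: "nat \<Rightarrow> qpoly"
    have "GHcoeff j n = of_int (2*j-1) * A S1" "GHcoeff j n = of_int (2*j-1) * A S2"
      using S1 S2 j unfolding S_spec_def A_def by blast+
    hence "of_int (2 * j - 1) * (A S1 - A S2) = 0" by (simp only: right_diff_distrib diff_self)
    hence "A S1 - A S2 = 0" by (rule of_int_mult_eq_0_qpoly) (use j in simp)
    hence "S1 0 - S2 0 + (\<Sum>i=1..n. (S1 i - S2 i) * of_int (j*(j-1)) ^ i) = 0"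
      by (simp add: A_def sum_subtractf algebra_simps)
    moreover have "{..n} = insert 0 {1..n}" by auto
    ultimately show ?thesis by (simp add: sum.insert)
  qed
  hence "S1 i - S2 i = 0" if "i \<le> n"
    using qpoly_coeffs_eq_0_on_pronics[where D="\<lambda>i. S1 i - S2 i"] that by blast
  thus "S1 i = S2 i" using S1 S2 by (cases "i \<le> n") (auto simp: S_spec_def)
qed

lemma Spoly_eq: assumes n: "n \<ge> 1" shows "Spoly n = Sexpl n"
  unfolding Spoly_def
proof (rule the_equality)
  show "S_spec n (Sexpl n)" by (rule Sexpl_spec[OF n])
  fix S assume "S_spec n S"
  thus "S = Sexpl n" using S_spec_unique[OF n _ Sexpl_spec[OF n]] by blast
qed

definition mdeg :: "(nat \<Rightarrow>\<^sub>0 nat) \<Rightarrow> nat" where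
  "mdeg m = (\<Sum>k\<in>ks m. lk m k)"

lemma mdeg_add: "mdeg (a + b) = mdeg a + mdeg b"
  unfolding mdeg_def by (rule setsum_keys_plus_distrib) auto

lemma mdeg_0[simp]: "mdeg 0 = 0" by (simp add: mdeg_def)

definition mdeg_le :: "nat \<Rightarrow> qpoly \<Rightarrow> bool" where
  "mdeg_le d p \<longleftrightarrow> (\<forall>m\<in>ks p. mdeg m \<le> d)"

lemma mdeg_le_mono: "mdeg_le d p \<Longrightarrow> d \<le> d' \<Longrightarrow> mdeg_le d' p" by (auto simp: mdeg_le_def)
lemma mdeg_le_0[simp]: "mdeg_le d 0" by (simp add: mdeg_le_def)
lemma mdeg_le_add: "mdeg_le d a \<Longrightarrow> mdeg_le d b \<Longrightarrow> mdeg_le d (a + b)"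
  using keys_add[of a b] by (auto simp: mdeg_le_def)
lemma mdeg_le_uminus: "mdeg_le d a \<Longrightarrow> mdeg_le d (- a)" by (simp add: mdeg_le_def)
lemma mdeg_le_diff: "mdeg_le d a \<Longrightarrow> mdeg_le d b \<Longrightarrow> mdeg_le d (a - b)"
  by (simp only: diff_conv_add_uminus mdeg_le_add mdeg_le_uminus)
lemma mdeg_le_mult: assumes "mdeg_le d a" "mdeg_le d' b" shows "mdeg_le (d + d') (a * b)"
  unfolding mdeg_le_def
proof
  fix m assume "m \<in> ks (a * b)"
  then obtain m1 m2 where "m = m1 + m2" "m1 \<in> ks a" "m2 \<in> ks b"
    using keys_mult[of a b] by blast
  with assms show "mdeg m \<le> d + d'" by (auto simp: mdeg_le_def mdeg_add intro: add_mono)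
qed
lemma mdeg_le_sum: "(\<And>i. i \<in> A \<Longrightarrow> mdeg_le d (f i)) \<Longrightarrow> mdeg_le d (sum f A)"
  by (induction A rule: infinite_finite_induct) (auto intro: mdeg_le_add)
lemma mdeg_le_mconst[simp]: "mdeg_le d (mconst c)"
  using keys_mconst[of c] by (auto simp: mdeg_le_def)
lemma mdeg_le_1[simp]: "mdeg_le d 1" by (simp add: mdeg_le_def)
lemma mdeg_le_of_nat[simp]: "mdeg_le d (of_nat n)" by (metis mdeg_le_mconst mconst_of_nat)
lemma mdeg_le_numeral[simp]: "mdeg_le d (numeral n)"
  by (metis mdeg_le_of_nat of_nat_numeral)
lemma mdeg_le_mvar: "mdeg_le 1 (mvar k)"
  by (simp add: mdeg_le_def mvar_def mdeg_def)
lemma mdeg_le_power: "mdeg_le d a \<Longrightarrow> mdeg_le (n * d) (a ^ n)"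
proof (induction n)
  case (Suc n)
  hence "mdeg_le (d + n * d) (a * a ^ n)" by (intro mdeg_le_mult) auto
  thus ?case by simp
qed simp
lemma mdeg_le_prod: "(\<And>i. i \<in> A \<Longrightarrow> mdeg_le (d i) (f i)) \<Longrightarrow> mdeg_le (\<Sum>i\<in>A. d i) (prod f A)"
proof (induction A rule: infinite_finite_induct)
  case (insert x F)
  hence "mdeg_le (d x + (\<Sum>i\<in>F. d i)) (f x * prod f F)" by (intro mdeg_le_mult) auto
  thus ?case using insert by simp
qed simp_all

lemma mvars_0[simp]: "mvars 0 = {}" by (simp add: mvars_def)
lemma mvars_add: "mvars (a + b) \<subseteq> mvars a \<union> mvars b"
  using keys_add[of a b] by (auto simp: mvars_def)
lemma mvars_uminus[simp]: "mvars (- a) = mvars a" by (simp add: mvars_def)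
lemma mvars_diff: "mvars (a - b) \<subseteq> mvars a \<union> mvars b"
  using mvars_add[of a "- b"] by simp
lemma mvars_mult: "mvars (a * b) \<subseteq> mvars a \<union> mvars b"
proof
  fix k assume "k \<in> mvars (a * b)"
  then obtain m where m: "m \<in> ks (a * b)" "k \<in> ks m" by (auto simp: mvars_def)
  then obtain m1 m2 where "m = m1 + m2" "m1 \<in> ks a" "m2 \<in> ks b"
    using keys_mult[of a b] by blast
  with m(2) keys_add[of m1 m2] show "k \<in> mvars a \<union> mvars b" by (auto simp: mvars_def)
qed
lemma mvars_sum: "mvars (sum f A) \<subseteq> (\<Union>i\<in>A. mvars (f i))"
proof (induction A rule: infinite_finite_induct)
  case (insert x F)
  thus ?case using mvars_add[of "f x" "sum f F"] by auto
qed auto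
lemma mvars_prod: "mvars (prod f A) \<subseteq> (\<Union>i\<in>A. mvars (f i))"
proof (induction A rule: infinite_finite_induct)
  case (insert x F)
  thus ?case using mvars_mult[of "f x" "prod f F"] by auto
qed (auto simp: mvars_def)
lemma mvars_power: "mvars (a ^ n) \<subseteq> mvars a"
proof (induction n)
  case (Suc n)
  thus ?case using mvars_mult[of a "a ^ n"] by auto
qed (simp add: mvars_def)
lemma mvars_mconst[simp]: "mvars (mconst c) = {}"
  using keys_mconst[of c] by (auto simp: mvars_def)
lemma mvars_of_nat[simp]: "mvars (of_nat n) = {}" by (metis mvars_mconst mconst_of_nat)
lemma mvars_numeral[simp]: "mvars (numeral n) = {}" by (metis mvars_of_nat of_nat_numeral)
lemma mvars_mvar: "mvars (mvar k) = {k}" by (simp add: mvars_def mvar_def)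
lemma mvars_mconst_mult: "mvars (mconst c * a) \<subseteq> mvars a"
  using mvars_mult[of "mconst c" a] by simp

section \<open>Substitution and the derivation D\<close>

definition subst_degree :: "(nat \<Rightarrow>\<^sub>0 nat) \<Rightarrow> nat" where
  "subst_degree m = (\<Sum>k\<in>ks m. lk m k * (k + 1))"

lemma weight_eq_subst_degree: "weight m = 2 * subst_degree m + mdeg m"
  by (simp add: weight_def subst_degree_def mdeg_def sum_distrib_left sum.distrib[symmetric] algebra_simps)

lemma mvars_meval:
  assumes "\<And>k. k \<in> mvars p \<Longrightarrow> mvars (f k) \<subseteq> B"
  shows "mvars (meval f p) \<subseteq> B"
proof -
  have "mvars (mconst (lk p m) * (\<Prod>k\<in>ks m. f k ^ lk m k)) \<subseteq> B" if m: "m \<in> ks p" for m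
  proof -
    have "mvars (\<Prod>k\<in>ks m. f k ^ lk m k) \<subseteq> B"
    proof -
      have "mvars (f k ^ lk m k) \<subseteq> B" if "k \<in> ks m" for k
      proof -
        have "k \<in> mvars p" using m that by (auto simp: mvars_def)
        thus ?thesis using mvars_power[of "f k" "lk m k"] assms[of k] by blast
      qed
      thus ?thesis using mvars_prod[of "\<lambda>k. f k ^ lk m k" "ks m"] by blast
    qed
    thus ?thesis using mvars_mult[of "mconst (lk p m)"] by auto
  qed
  thus ?thesis unfolding meval_def using mvars_sum by blast
qed

lemma mdeg_le_meval:
  assumes f: "\<And>k. mdeg_le (k + 1) (f k)" and p: "weight_le (2 * D + 1) p"
  shows "mdeg_le D (meval f p)"
  unfolding meval_def
proof (rule mdeg_le_sum)
  fix m assume m: "m \<in> ks p"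
  have "mdeg_le (\<Sum>k\<in>ks m. lk m k * (k + 1)) (\<Prod>k\<in>ks m. f k ^ lk m k)"
    by (rule mdeg_le_prod) (rule mdeg_le_power[OF f])
  hence "mdeg_le (0 + subst_degree m) (mconst (lk p m) * (\<Prod>k\<in>ks m. f k ^ lk m k))"
    unfolding subst_degree_def by (intro mdeg_le_mult) auto
  thus "mdeg_le D (mconst (lk p m) * (\<Prod>k\<in>ks m. f k ^ lk m k))"
    by (rule mdeg_le_mono) (use p m in \<open>auto simp: weight_le_def weight_eq_subst_degree\<close>)
qed

lemma meval_mconst: "meval f (mconst c) = mconst c"
  by (cases "c = 0") (auto simp: meval_def mconst_def)

definition dmon :: "(nat \<Rightarrow>\<^sub>0 nat) \<Rightarrow> qpoly" where
  "dmon m = (\<Sum>k\<in>ks m. of_nat (lk m k) * mvar (Suc k) * mvar k ^ (lk m k - 1) *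
          (\<Prod>k'\<in>ks m - {k}. mvar k' ^ lk m k'))"

lemma mderiv_dmon: "mderiv p = (\<Sum>m\<in>ks p. mconst (lk p m) * dmon m)"
  by (simp add: mderiv_def dmon_def)

lemma mdeg_le_dmon: "mdeg_le (mdeg m) (dmon m)"
  unfolding dmon_def
proof (rule mdeg_le_sum)
  fix k assume k: "k \<in> ks m"
  have fin: "finite (ks m)" by simp
  have t: "mdeg m = lk m k + (\<Sum>k'\<in>ks m - {k}. lk m k')"
    unfolding mdeg_def using sum.remove[OF fin k] by simp
  have l1: "lk m k \<ge> 1" using k by (simp add: in_keys_iff)
  have "mdeg_le (0 + 1 + (lk m k - 1) * 1 + (\<Sum>k'\<in>ks m - {k}. lk m k' * 1))
     (of_nat (lk m k) * mvar (Suc k) * mvar k ^ (lk m k - 1) * (\<Prod>k'\<in>ks m - {k}. mvar k' ^ lk m k'))"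
    by (intro mdeg_le_mult mdeg_le_mvar mdeg_le_power mdeg_le_prod mdeg_le_of_nat)
  thus "mdeg_le (mdeg m) (of_nat (lk m k) * mvar (Suc k) * mvar k ^ (lk m k - 1) * (\<Prod>k'\<in>ks m - {k}. mvar k' ^ lk m k'))"
    using t l1 by simp
qed

lemma mvars_dmon:
  assumes "ks m \<subseteq> {..<b}" shows "mvars (dmon m) \<subseteq> {..<Suc b}"
  unfolding dmon_def
proof (rule order.trans[OF mvars_sum], rule UN_least)
  fix k assume k: "k \<in> ks m"
  let ?t = "of_nat (lk m k) * mvar (Suc k) * mvar k ^ (lk m k - 1) * (\<Prod>k'\<in>ks m - {k}. mvar k' ^ lk m k')"
  have a1: "mvars (of_nat (lk m k) * mvar (Suc k) :: qpoly) \<subseteq> {Suc k}"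
    using mvars_mult[of "of_nat (lk m k)" "mvar (Suc k)"] by (simp add: mvars_mvar)
  have a2: "mvars (mvar k ^ (lk m k - 1)) \<subseteq> {k}" using mvars_power[of "mvar k"] by (simp add: mvars_mvar)
  have a3: "mvars (\<Prod>k'\<in>ks m - {k}. mvar k' ^ lk m k') \<subseteq> ks m"
  proof -
    have "mvars (mvar k' ^ lk m k') \<subseteq> {k'}" for k' using mvars_power[of "mvar k'"] by (simp add: mvars_mvar)
    thus ?thesis using mvars_prod[of "\<lambda>k'. mvar k' ^ lk m k'" "ks m - {k}"] by blast
  qed
  have "mvars (of_nat (lk m k) * mvar (Suc k) * mvar k ^ (lk m k - 1)) \<subseteq> {Suc k} \<union> {k}"
    using mvars_mult[of "of_nat (lk m k) * mvar (Suc k)" "mvar k ^ (lk m k - 1)"] a1 a2 by blast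
  hence "mvars ?t \<subseteq> {Suc k} \<union> {k} \<union> ks m"
    using mvars_mult[of "of_nat (lk m k) * mvar (Suc k) * mvar k ^ (lk m k - 1)"] a3 by blast
  also have "\<dots> \<subseteq> {..<Suc b}" using assms k by auto
  finally show "mvars ?t \<subseteq> {..<Suc b}" .
qed

lemma mdeg_le_mderiv: "mdeg_le d p \<Longrightarrow> mdeg_le d (mderiv p)"
  unfolding mderiv_dmon
proof (rule mdeg_le_sum)
  fix m assume "mdeg_le d p" "m \<in> ks p"
  hence "mdeg m \<le> d" by (simp add: mdeg_le_def)
  have "mdeg_le (0 + mdeg m) (mconst (lk p m) * dmon m)" by (intro mdeg_le_mult mdeg_le_dmon) simp
  thus "mdeg_le d (mconst (lk p m) * dmon m)" by (rule mdeg_le_mono) (use \<open>mdeg m \<le> d\<close> in simp)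
qed

lemma mvars_mderiv: assumes "mvars p \<subseteq> {..<b}" shows "mvars (mderiv p) \<subseteq> {..<Suc b}"
  unfolding mderiv_dmon
proof (rule order.trans[OF mvars_sum], rule UN_least)
  fix m assume "m \<in> ks p"
  hence "ks m \<subseteq> {..<b}" using assms by (auto simp: mvars_def)
  thus "mvars (mconst (lk p m) * dmon m) \<subseteq> {..<Suc b}"
    using mvars_mconst_mult mvars_dmon by blast
qed

lemma mvars_mderiv_minus_mvar:
  assumes "mvars (p - mvar b) \<subseteq> {..<b}"
  shows "mvars (mderiv p - mvar (Suc b)) \<subseteq> {..<Suc b}"
proof -
  define \<mu> where "\<mu> = Poly_Mapping.single b (1::nat)"
  have "\<mu> \<notin> ks (p - mvar b)"
  proof
    assume "\<mu> \<in> ks (p - mvar b)"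
    moreover have "b \<in> ks \<mu>" by (simp add: \<mu>_def)
    ultimately have "b \<in> mvars (p - mvar b)" unfolding mvars_def by blast
    with assms show False by auto
  qed
  hence "lk (p - mvar b) \<mu> = 0" by (simp add: in_keys_iff)
  hence lpmu: "lk p \<mu> = 1" by (simp add: lookup_minus mvar_def \<mu>_def)
  hence mu: "\<mu> \<in> ks p" by (simp add: in_keys_iff)
  have fin: "finite (ks p)" by simp
  have "mderiv p = mconst (lk p \<mu>) * dmon \<mu> + (\<Sum>m\<in>ks p - {\<mu>}. mconst (lk p m) * dmon m)"
    unfolding mderiv_dmon using sum.remove[OF fin mu] by simp
  also have "mconst (lk p \<mu>) * dmon \<mu> = mvar (Suc b)"
    unfolding lpmu mconst_1 mult_1_left by (simp add: dmon_def \<mu>_def)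
  finally have "mderiv p - mvar (Suc b) = (\<Sum>m\<in>ks p - {\<mu>}. mconst (lk p m) * dmon m)" by simp
  also have "mvars \<dots> \<subseteq> {..<Suc b}"
  proof (rule order.trans[OF mvars_sum], rule UN_least)
    fix m assume m: "m \<in> ks p - {\<mu>}"
    have mb: "mvar b = Poly_Mapping.single \<mu> 1" by (simp add: mvar_def \<mu>_def)
    have "\<mu> \<noteq> m" using m by auto
    hence "lk (mvar b) m = 0" unfolding mb by (rule lookup_single_not_eq)
    hence "m \<in> ks (p - mvar b)" using m by (simp add: in_keys_iff lookup_minus)
    hence "ks m \<subseteq> {..<b}" using assms by (auto simp: mvars_def)
    thus "mvars (mconst (lk p m) * dmon m) \<subseteq> {..<Suc b}"
      using mvars_mconst_mult mvars_dmon by blast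
  qed
  finally show ?thesis .
qed

lemma Ppoly_Suc_props:
  "mvars (Ppoly (Suc j)) \<subseteq> {..<Suc j} \<and> mdeg_le (Suc j) (Ppoly (Suc j)) \<and>
   mvars (Ppoly (Suc j) - mvar j) \<subseteq> {..<j}"
proof (induction j)
  case 0 thus ?case using mdeg_le_mvar[of 0] by (simp add: mvars_mvar)
next
  case (Suc j)
  let ?P = "Ppoly (Suc j)"
  have P: "Ppoly (Suc (Suc j)) = mderiv ?P - 3 * mvar 0 * ?P" by simp
  have v3: "mvars (3 * mvar 0 * ?P) \<subseteq> {..<Suc j}"
    using mvars_mult[of "3 * mvar 0" ?P] mvars_mult[of 3 "mvar 0"] Suc.IH by (auto simp: mvars_mvar)
  have "mvars (mderiv ?P) \<subseteq> {..<Suc (Suc j)}" using mvars_mderiv Suc.IH by blast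
  hence A: "mvars (Ppoly (Suc (Suc j))) \<subseteq> {..<Suc (Suc j)}"
  proof -
    have "mvars (Ppoly (Suc (Suc j))) \<subseteq> mvars (mderiv ?P) \<union> mvars (3 * mvar 0 * ?P)"
      unfolding P by (rule mvars_diff)
    also have "\<dots> \<subseteq> {..<Suc (Suc j)}"
    proof (rule Un_least)
      show "mvars (3 * mvar 0 * ?P) \<subseteq> {..<Suc (Suc j)}" using v3 by (rule order.trans) auto
    qed fact
    finally show ?thesis .
  qed
  have "mdeg_le (0 + 1 + Suc j) (3 * mvar 0 * ?P)"
    by (rule mdeg_le_mult[OF mdeg_le_mult[OF mdeg_le_numeral mdeg_le_mvar]]) (use Suc.IH in blast)
  moreover have "mdeg_le (Suc j) (mderiv ?P)" using Suc.IH mdeg_le_mderiv by blast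
  ultimately have B: "mdeg_le (Suc (Suc j)) (Ppoly (Suc (Suc j)))"
    unfolding P by (intro mdeg_le_diff) (auto elim: mdeg_le_mono)
  have "mvars (mderiv ?P - mvar (Suc j)) \<subseteq> {..<Suc j}"
    by (rule mvars_mderiv_minus_mvar) (use Suc.IH in auto)
  hence C: "mvars (Ppoly (Suc (Suc j)) - mvar (Suc j)) \<subseteq> {..<Suc j}"
    unfolding P using mvars_diff[of "mderiv ?P - mvar (Suc j)" "3 * mvar 0 * ?P"] v3
    by (auto simp: algebra_simps)
  show ?case using A B C by blast
qed

section \<open>The recursion for the polynomials C_m\<close>

lemma length_Clist[simp]: "length (Clist m) = m"
  by (induction m) auto

lemma Clist_nth: "k < m \<Longrightarrow> Clist m ! k = Chat (Suc k)"
proof (induction m)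
  case 0 thus ?case by simp
next
  case (Suc m)
  show ?case
  proof (cases "k < m")
    case True thus ?thesis using Suc by (simp add: nth_append)
  next
    case False
    hence "k = m" using Suc.prems by simp
    thus ?thesis by (simp add: Chat_def)
  qed
qed

lemma Chat_Cstep: "n \<ge> 1 \<Longrightarrow> Chat n = Cstep n (Clist (n - 1))"
  by (cases n) (auto simp: Chat_def nth_append)

lemma subst_list_Clist: "subst_list (Clist m) k = (if k < m then Chat (Suc k) else 0)"
  by (simp add: subst_list_def Clist_nth)

lemma mtotal_degree_le: "mdeg_le d p \<Longrightarrow> mtotal_degree p \<le> d"
  unfolding mtotal_degree_def mdeg_le_def mdeg_def by (subst Max_le_iff) auto

lemma weight_le_Sexpl: "n \<ge> 1 \<Longrightarrow> weight_le (2 * (n - i) + 1) (Sexpl n i)"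
  using weight_le_Tcoeff[of i n] weight_le_Tcoeff[of 0 n] weight_le_mvar[of "n - 1"]
  by (auto simp: Sexpl_def intro!: weight_le_diff elim!: weight_le_mono)

lemma Sexpl_top_identity:
  "of_nat (3 * 2 ^ Suc m) * (Rsublead (Suc (Suc m)) + of_nat (Suc (Suc m)) * Rlead (Suc (Suc m)))
     = (-1) ^ m / fact m"
proof -
  have "Rsublead (Suc (Suc m)) + of_nat (Suc (Suc m)) * Rlead (Suc (Suc m))
      = (2 * of_nat m + 2) / 3 * (of_nat (Suc (Suc m)) * Rlead (Suc (Suc m)))"
    by (simp add: Rsublead_def field_simps del: of_nat_Suc) (simp add: algebra_simps)
  also have "\<dots> = - (of_nat (Suc m) * Rlead (Suc m)) / 3"
    by (simp only: Rlead_Suc[of "Suc m"]) (simp add: field_simps)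
  also have "\<dots> = Rlead m / 6" by (simp only: Rlead_Suc)
  finally show ?thesis by (simp add: Rlead_def)
qed

lemma Chat_eq:
  assumes "n \<ge> 1"
  defines "E \<equiv> \<lambda>i. meval (subst_list (Clist (n - 1))) (Sexpl n i)"
  shows "Chat n = - E 0 + (\<Sum>i=1..n. of_nat (3 * 2 ^ i) * E i * Ppoly i)"
  using assms by (simp add: Chat_Cstep Cstep_def E_def Spoly_eq)

lemma meval_Sexpl_top:
  "of_nat (3 * 2 ^ Suc m) * meval f (Sexpl (Suc m) (Suc m)) = mconst ((-1) ^ m / fact m)"
  using Sexpl_top_identity[of m]
  by (simp add: Sexpl_def Tcoeff_top meval_mconst flip: mconst_mult mconst_of_nat)

lemma mvars_add_subset: "mvars a \<subseteq> B \<Longrightarrow> mvars b \<subseteq> B \<Longrightarrow> mvars (a + b) \<subseteq> B"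
  using mvars_add by blast
lemma mvars_mult_subset: "mvars a \<subseteq> B \<Longrightarrow> mvars b \<subseteq> B \<Longrightarrow> mvars (a * b) \<subseteq> B"
  using mvars_mult by blast
lemma mvars_sum_subset: "(\<And>i. i \<in> A \<Longrightarrow> mvars (f i) \<subseteq> B) \<Longrightarrow> mvars (sum f A) \<subseteq> B"
  using mvars_sum by blast

lemma mvars_mdeg_le_add_mconst_mvar:
  assumes "mvars F \<subseteq> {..<k}" "mdeg_le (Suc k) F"
  shows "mvars (F + mconst c * mvar k) \<subseteq> {..<Suc k} \<and> mdeg_le (Suc k) (F + mconst c * mvar k)"
proof
  have "mvars (mconst c * mvar k) \<subseteq> {..<Suc k}"
    using mvars_mconst_mult[of c "mvar k"] by (auto simp: mvars_mvar)
  thus "mvars (F + mconst c * mvar k) \<subseteq> {..<Suc k}"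
    by (rule mvars_add_subset[rotated]) (use assms(1) in auto)
  have "mdeg_le (0 + 1) (mconst c * mvar k)" by (intro mdeg_le_mult mdeg_le_mconst mdeg_le_mvar)
  thus "mdeg_le (Suc k) (F + mconst c * mvar k)"
    by (intro mdeg_le_add assms(2)) (auto elim: mdeg_le_mono)
qed

text \<open>Only the summand i = n of the recursion involves X_(n-1), through P_n = X_(n-1) + Q.\<close>

lemma Cstep_sum_decomp:
  fixes E :: "nat \<Rightarrow> qpoly"
  assumes Evars: "\<And>i. i \<le> Suc m \<Longrightarrow> mvars (E i) \<subseteq> {..<m}"
    and Edeg: "\<And>i. mdeg_le (Suc m - i) (E i)"
    and Etop: "of_nat (3 * 2 ^ Suc m) * E (Suc m) = mconst c"
  shows "\<exists>F. mvars F \<subseteq> {..<m} \<and> mdeg_le (Suc m) F \<and>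
           - E 0 + (\<Sum>i=1..Suc m. of_nat (3 * 2 ^ i) * E i * Ppoly i) = F + mconst c * mvar m"
proof -
  define Q where "Q = Ppoly (Suc m) - mvar m"
  have Q: "mvars Q \<subseteq> {..<m}" "mdeg_le (Suc m) Q"
    using Ppoly_Suc_props[of m] mdeg_le_mvar[of m]
    by (auto simp: Q_def intro!: mdeg_le_diff elim: mdeg_le_mono)
  define F where "F = - E 0 + (\<Sum>i=1..m. of_nat (3 * 2 ^ i) * E i * Ppoly i) + mconst c * Q"
  have "of_nat (3 * 2 ^ Suc m) * E (Suc m) * Ppoly (Suc m) = mconst c * Q + mconst c * mvar m"
    unfolding Etop Q_def by (simp add: algebra_simps)
  hence "- E 0 + (\<Sum>i=1..Suc m. of_nat (3 * 2 ^ i) * E i * Ppoly i) = F + mconst c * mvar m"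
    by (simp add: F_def algebra_simps)
  moreover have "mvars F \<subseteq> {..<m}"
  proof -
    have "mvars (of_nat (3 * 2 ^ i) * E i * Ppoly i) \<subseteq> {..<m}" if i: "i \<in> {1..m}" for i
    proof -
      have "mvars (Ppoly i) \<subseteq> {..<m}" using Ppoly_Suc_props[of "i - 1"] i by auto
      moreover have "mvars (E i) \<subseteq> {..<m}" using Evars i by simp
      ultimately show ?thesis using mvars_of_nat[of "3 * 2 ^ i"] by (intro mvars_mult_subset) auto
    qed
    moreover have "mvars (mconst c * Q) \<subseteq> {..<m}" using mvars_mconst_mult Q(1) by blast
    ultimately show ?thesis unfolding F_def using Evars[of 0]
      by (intro mvars_add_subset mvars_sum_subset) auto
  qed
  moreover have "mdeg_le (Suc m) F"
  proof -
    have "mdeg_le (Suc m) (of_nat (3 * 2 ^ i) * E i * Ppoly i)" if i: "i \<in> {1..m}" for i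
    proof -
      have "mdeg_le (0 + (Suc m - i) + i) (of_nat (3 * 2 ^ i) * E i * Ppoly i)"
        using i Ppoly_Suc_props[of "i - 1"] by (intro mdeg_le_mult Edeg mdeg_le_of_nat) auto
      thus ?thesis using i by simp
    qed
    moreover have "mdeg_le (0 + Suc m) (mconst c * Q)" by (intro mdeg_le_mult mdeg_le_mconst Q(2))
    ultimately show ?thesis using Edeg[of 0] unfolding F_def
      by (intro mdeg_le_add mdeg_le_uminus mdeg_le_sum) auto
  qed
  ultimately show ?thesis by blast
qed

lemma Chat_decomp:
  assumes "n \<ge> 1"
  shows "\<exists>F. mvars F \<subseteq> {..<n-1} \<and> mdeg_le n F \<and>
           Chat n = F + mconst ((-1) ^ (n-1) / fact (n-1)) * mvar (n-1)"
  using assms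
proof (induction n rule: less_induct)
  case (less n)
  then obtain m where n: "n = Suc m" by (cases n) auto
  define E where "E i = meval (subst_list (Clist m)) (Sexpl n i)" for i
  have C: "mvars (subst_list (Clist m) k) \<subseteq> {..<Suc k} \<and> mdeg_le (Suc k) (subst_list (Clist m) k)"
    for k
  proof (cases "k < m")
    case True
    then obtain F where "mvars F \<subseteq> {..<k}" "mdeg_le (Suc k) F"
      "Chat (Suc k) = F + mconst ((-1) ^ k / fact k) * mvar k"
      using less.IH[of "Suc k"] n by auto
    thus ?thesis using mvars_mdeg_le_add_mconst_mvar True by (simp add: subst_list_Clist)
  qed (simp add: subst_list_Clist)
  have "mvars (E i) \<subseteq> {..<m}" if "i \<le> n" for i
    unfolding E_def
  proof (rule mvars_meval)
    fix k assume "k \<in> mvars (Sexpl n i)"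
    hence "k < m" using mvars_Sexpl[of n i] that n by auto
    thus "mvars (subst_list (Clist m) k) \<subseteq> {..<m}" using C[of k] by auto
  qed
  moreover have "mdeg_le (n - i) (E i)" for i
    unfolding E_def using weight_le_Sexpl[of n i] C n by (intro mdeg_le_meval) auto
  moreover have "of_nat (3 * 2 ^ n) * E n = mconst ((-1) ^ m / fact m)"
    unfolding E_def n by (rule meval_Sexpl_top)
  ultimately show ?case
    using Cstep_sum_decomp[of m E] Chat_eq[OF less.prems] by (simp add: E_def n)
qed

theorem proposition4p4:
  fixes n :: nat
  assumes "n \<ge> 1"
  shows "\<exists>F. mvars F \<subseteq> {..<n-1} \<and> mtotal_degree F \<le> n \<and>
           Chat n = F + mconst ((-1) ^ (n-1) / fact (n-1)) * mvar (n-1)"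
  using Chat_decomp[OF assms] mtotal_degree_le by blast

end
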